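(* Let $\theta\in(0,1)$, $0<\mu\le1/\sqrt n$, and $\mathbf X_0\in\mathbb R^{n\times p}$ with $\mathbf X_0\sim_{i.i.d.}\mathrm{BG}(\theta)$. For every fixed $\mathbf w\in\Gamma\setminus\{\mathbf 0\}$ and every $t>0$, $$\mathbb P\Big[\Big|\frac{\mathbf w^*\nabla^2g(\mathbf w;\mathbf X_0)\mathbf w}{\|\mathbf w\|^2}-\mathbb E\Big[\frac{\mathbf w^*\nabla^2g(\mathbf w;\mathbf X_0)\mathbf w}{\|\mathbf w\|^2}\Big]\Big|\ge t\Big]\le4\exp\Big(-\frac{p\mu^2t^2}{512n^2+32n\mu t}\Big).$$
   Context: $Z\sim\mathrm{BG}(\theta)$ means $Z=BG$ with $B\sim\mathrm{Ber}(\theta)$, $G\sim\mathcal N(0,1)$ independent; $\mathbf X\sim_{i.i.d.}\mathrm{BG}(\theta)$ means all entries are independent $\mathrm{BG}(\theta)$. $h_\mu(z)=\mu\log\cosh(z/\mu)$. For $\mathbf Y\in\mathbb R^{n\times p}$ with columns $\mathbf y_k$, $f(\mathbf q;\mathbf Y)=\frac1p\sum_k h_\mu(\mathbf q^*\mathbf y_k)$; for $\mathbf w$ in the open unit ball of $\mathbb R^{n-1}$, $\mathbf q(\mathbf w)=(\mathbf w,\sqrt{1-\|\mathbf w\|^2})$ and $g(\mathbf w;\mathbf Y)=f(\mathbf q(\mathbf w);\mathbf Y)$; $\nabla^2$ is the Hessian in $\mathbf w$. $\Gamma=\{\mathbf w\in\mathbb R^{n-1}:\|\mathbf w\|<\sqrt{(4n-1)/(4n)}\}$.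 *)

theory Defs
  imports "HOL-Probability.Probability"
begin

definition BG :: "real \<Rightarrow> real measure" where
  "BG \<theta> = distr (measure_pmf (bernoulli_pmf \<theta>) \<Otimes>\<^sub>M density lborel std_normal_density) borel
      (\<lambda>(b, g). (if b then 1 else 0) * g)"

definition BG_matrix :: "nat \<Rightarrow> nat \<Rightarrow> real \<Rightarrow> (nat \<times> nat \<Rightarrow> real) measure" where
  "BG_matrix n p \<theta> = (\<Pi>\<^sub>M ik \<in> {..<n} \<times> {..<p}. BG \<theta>)"

definition h_mu :: "real \<Rightarrow> real \<Rightarrow> real" where
  "h_mu \<mu> z = \<mu> * ln (cosh (z / \<mu>))"

definition f_obj :: "nat \<Rightarrow> nat \<Rightarrow> real \<Rightarrow> (nat \<Rightarrow> real) \<Rightarrow> (nat \<times> nat \<Rightarrow> real) \<Rightarrow> real" where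
  "f_obj n p \<mu> q Y = (1 / real p) * (\<Sum>k<p. h_mu \<mu> (\<Sum>i<n. q i * Y (i, k)))"

definition sqnorm :: "nat \<Rightarrow> (nat \<Rightarrow> real) \<Rightarrow> real" where
  "sqnorm m w = (\<Sum>i<m. (w i)\<^sup>2)"

definition q_map :: "nat \<Rightarrow> (nat \<Rightarrow> real) \<Rightarrow> (nat \<Rightarrow> real)" where
  "q_map n w = (\<lambda>i. if i < n - 1 then w i
                     else if i = n - 1 then sqrt (1 - sqnorm (n - 1) w) else 0)"

definition g_obj :: "nat \<Rightarrow> nat \<Rightarrow> real \<Rightarrow> (nat \<Rightarrow> real) \<Rightarrow> (nat \<times> nat \<Rightarrow> real) \<Rightarrow> real" where
  "g_obj n p \<mu> w Y = f_obj n p \<mu> (q_map n w) Y"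

definition partial :: "((nat \<Rightarrow> real) \<Rightarrow> real) \<Rightarrow> nat \<Rightarrow> (nat \<Rightarrow> real) \<Rightarrow> real" where
  "partial F j w = deriv (\<lambda>r. F (w(j := r))) (w j)"

definition hessian :: "((nat \<Rightarrow> real) \<Rightarrow> real) \<Rightarrow> (nat \<Rightarrow> real) \<Rightarrow> nat \<Rightarrow> nat \<Rightarrow> real" where
  "hessian F w i j = partial (\<lambda>v. partial F j v) i w"

definition hess_quad :: "nat \<Rightarrow> ((nat \<Rightarrow> real) \<Rightarrow> real) \<Rightarrow> (nat \<Rightarrow> real) \<Rightarrow> real" where
  "hess_quad m F w = (\<Sum>i<m. \<Sum>j<m. w i * hessian F w i j * w j)"

definition Gamma_set :: "nat \<Rightarrow> (nat \<Rightarrow> real) set" where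
  "Gamma_set n = {w. sqnorm (n - 1) w < (4 * real n - 1) / (4 * real n)}"

end

(*
  Write q = q(w), s = q_n = sqrt (1 - ||w||^2) and x_k for the columns of X_0. Differentiating
  g twice gives w^* Hess g w / ||w||^2 = (1/p) sum_k (a_k - b_k), where
    a_k = (1 - tanh^2 (q^* x_k / mu)) / mu * (w^* x_k' - ||w||^2 x_k(n) / s)^2 / ||w||^2,
    b_k = tanh (q^* x_k / mu) x_k(n) / s^3
  (x_k' the first n - 1 entries of x_k; curv_term and tanh_term below). Each of a_k and b_k
  depends on the column x_k only, so both families are independent. Now a_k is at most 1/mu
  times the square of a linear form in x_k whose coefficient vector has squared norm 1/s^2,
  and |b_k| <= |x_k(n)| / s^3. Since every moment of a BG variable, and of a linear form in
  independent ones, is dominated by the corresponding Gaussian moment, E|a_k|^m and E|b_k|^m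
  are at most m!/2 R^m with R = 8 n / mu: on Gamma we have 1/s^2 <= 4n, and mu <= 1/sqrt n.
  Bernstein's inequality at level t/2 for each of the two averages and a union bound give
  the claim.
*)
theory Submission
  imports Defs
begin

section \<open>The Hessian quadratic form of g\<close>

lemma has_real_derivative_h_mu:
  assumes "0 < \<mu>"
  shows "(h_mu \<mu> has_real_derivative tanh (z / \<mu>)) (at z)"
  unfolding h_mu_def[abs_def] using assms
  by (auto intro!: derivative_eq_intros simp: tanh_def field_simps)

lemma sum_fun_upd:
  fixes F :: "'a \<Rightarrow> 'b \<Rightarrow> real"
  assumes "finite A" "j \<in> A"
  shows "(\<Sum>i\<in>A. F i ((v(j:=r)) i)) = (\<Sum>i\<in>A. F i (v i)) - F j (v j) + F j r"
proof -
  have "(\<Sum>i\<in>A. F i ((v(j:=r)) i)) = F j r + (\<Sum>i\<in>A-{j}. F i ((v(j:=r)) i))"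
    using assms by (simp add: sum.remove)
  also have "(\<Sum>i\<in>A-{j}. F i ((v(j:=r)) i)) = (\<Sum>i\<in>A-{j}. F i (v i))"
    by (rule sum.cong) auto
  also have "\<dots> = (\<Sum>i\<in>A. F i (v i)) - F j (v j)"
    using assms sum.remove[of A j "\<lambda>i. F i (v i)"] by simp
  finally show ?thesis by simp
qed

lemma sqnorm_nonneg: "0 \<le> sqnorm m w"
  unfolding sqnorm_def by (intro sum_nonneg) auto

lemma sqnorm_fun_upd:
  assumes "j < m"
  shows "sqnorm m (v(j:=r)) = (sqnorm m v - (v j)\<^sup>2) + r\<^sup>2"
  unfolding sqnorm_def using sum_fun_upd[of "{..<m}" j "\<lambda>i x. x\<^sup>2" v r] assms by simp

text \<open>\<open>qdot n v X k\<close> is \<open>q(v)^* x_k\<close>, the argument of \<open>h_mu\<close> in \<open>g\<close>;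
  \<open>dqdot n v X i k\<close> is its partial derivative in \<open>v i\<close>.\<close>

definition qdot :: "nat \<Rightarrow> (nat \<Rightarrow> real) \<Rightarrow> (nat \<times> nat \<Rightarrow> real) \<Rightarrow> nat \<Rightarrow> real" where
  "qdot n v X k = (\<Sum>i<n-1. v i * X (i,k)) + sqrt (1 - sqnorm (n-1) v) * X (n-1,k)"

definition dqdot :: "nat \<Rightarrow> (nat \<Rightarrow> real) \<Rightarrow> (nat \<times> nat \<Rightarrow> real) \<Rightarrow> nat \<Rightarrow> nat \<Rightarrow> real" where
  "dqdot n v X i k = X (i,k) - v i * X (n-1,k) / sqrt (1 - sqnorm (n-1) v)"

lemma g_obj_eq:
  assumes "n \<ge> 1"
  shows "g_obj n p \<mu> v X = (1 / real p) * (\<Sum>k<p. h_mu \<mu> (qdot n v X k))"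
proof -
  obtain N where n: "n = Suc N" using assms by (cases n) auto
  have "(\<Sum>i<n. q_map n v i * X (i, k)) = qdot n v X k" for k
    unfolding n by (simp add: qdot_def q_map_def)
  then show ?thesis unfolding g_obj_def f_obj_def by simp
qed

lemma has_real_derivative_qdot:
  assumes "j < n - 1" "sqnorm (n-1) v < 1"
  shows "((\<lambda>r. qdot n (v(j:=r)) X k) has_real_derivative dqdot n v X j k) (at (v j))"
proof -
  define A where "A = (\<Sum>i<n-1. v i * X (i,k)) - v j * X (j,k)"
  define C where "C = sqnorm (n-1) v - (v j)\<^sup>2"
  have "(\<lambda>r. qdot n (v(j:=r)) X k) = (\<lambda>r. A + r * X (j,k) + sqrt (1 - (C + r\<^sup>2)) * X (n-1,k))"
    unfolding qdot_def sqnorm_fun_upd[OF assms(1)] A_def C_def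
    using sum_fun_upd[of "{..<n-1}" j "\<lambda>i x. x * X (i,k)" v] assms(1) by simp
  moreover have "((\<lambda>r. A + r * X (j,k) + sqrt (1 - (C + r\<^sup>2)) * X (n-1,k)) has_real_derivative
      X (j,k) - v j * X (n-1,k) / sqrt (1 - (C + (v j)\<^sup>2))) (at (v j))"
    using assms(2) by (auto intro!: derivative_eq_intros simp: C_def field_simps power2_eq_square)
  ultimately show ?thesis by (simp add: dqdot_def C_def)
qed

lemma DERIV_diff_div_sqrt:
  assumes pos: "0 < 1 - (C + r0\<^sup>2)" and u: "(u has_real_derivative du) (at r0)"
  shows "((\<lambda>r. a - u r * b / sqrt (1 - (C + r\<^sup>2))) has_real_derivative
           - (du * b / sqrt (1 - (C + r0\<^sup>2)) + u r0 * b * r0 / sqrt (1 - (C + r0\<^sup>2)) ^ 3)) (at r0)"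
proof -
  define s where "s = sqrt (1 - (C + r0\<^sup>2))"
  have s: "0 < s" using pos by (simp add: s_def)
  have ds: "((\<lambda>r. sqrt (1 - (C + r\<^sup>2))) has_real_derivative - r0 / s) (at r0)"
    using pos by (auto intro!: derivative_eq_intros simp: s_def field_simps)
  have "((\<lambda>r. u r * b / sqrt (1 - (C + r\<^sup>2))) has_real_derivative
          (du * b * s - u r0 * b * (- r0 / s)) / s\<^sup>2) (at r0)"
    using DERIV_quotient[OF DERIV_cmult_right[OF u, where c=b] ds] s
    by (simp add: s_def power2_eq_square mult_ac)
  moreover have "(du * b * s - u r0 * b * (- r0 / s)) / s\<^sup>2 = du * b / s + u r0 * b * r0 / s ^ 3"
    using s by (simp add: field_simps power2_eq_square power3_eq_cube)
  ultimately have "((\<lambda>r. u r * b / sqrt (1 - (C + r\<^sup>2))) has_real_derivative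
      du * b / s + u r0 * b * r0 / s ^ 3) (at r0)" by simp
  from DERIV_diff[OF DERIV_const this, of a] show ?thesis
    unfolding s_def by simp
qed

lemma has_real_derivative_dqdot:
  assumes "i < n - 1" "sqnorm (n-1) v < 1"
  shows "((\<lambda>r. dqdot n (v(i:=r)) X j k) has_real_derivative
           - X (n-1,k) * ((if i = j then 1 else 0) / sqrt (1 - sqnorm (n-1) v)
                          + v i * v j / sqrt (1 - sqnorm (n-1) v) ^ 3)) (at (v i))"
proof -
  define C where "C = sqnorm (n-1) v - (v i)\<^sup>2"
  have pos: "1 - (C + (v i)\<^sup>2) > 0" using assms by (simp add: C_def)
  have du: "((\<lambda>r. (v(i:=r)) j) has_real_derivative (if i = j then 1 else 0)) (at (v i))"
    by (cases "i = j") (auto intro!: derivative_eq_intros)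
  have "(\<lambda>r. dqdot n (v(i:=r)) X j k) = (\<lambda>r. X (j,k) - (v(i:=r)) j * X (n-1,k) / sqrt (1 - (C + r\<^sup>2)))"
    unfolding dqdot_def sqnorm_fun_upd[OF assms(1)] C_def by simp
  with DERIV_diff_div_sqrt[OF pos du, of "X (j,k)" "X (n-1,k)"] show ?thesis
    by (auto elim!: DERIV_cong simp: C_def algebra_simps)
qed

definition grad_g :: "nat \<Rightarrow> nat \<Rightarrow> real \<Rightarrow> (nat \<Rightarrow> real) \<Rightarrow> (nat \<times> nat \<Rightarrow> real) \<Rightarrow> nat \<Rightarrow> real" where
  "grad_g n p \<mu> v X j = (1 / real p) * (\<Sum>k<p. tanh (qdot n v X k / \<mu>) * dqdot n v X j k)"

definition hess_g :: "nat \<Rightarrow> nat \<Rightarrow> real \<Rightarrow> (nat \<Rightarrow> real) \<Rightarrow> (nat \<times> nat \<Rightarrow> real) \<Rightarrow> nat \<Rightarrow> nat \<Rightarrow> real" where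
  "hess_g n p \<mu> v X i j = (1 / real p) * (\<Sum>k<p.
      (1 - (tanh (qdot n v X k / \<mu>))\<^sup>2) / \<mu> * dqdot n v X i k * dqdot n v X j k
      - tanh (qdot n v X k / \<mu>) * X (n-1,k) *
        ((if i = j then 1 else 0) / sqrt (1 - sqnorm (n-1) v) + v i * v j / sqrt (1 - sqnorm (n-1) v) ^ 3))"

lemma has_real_derivative_g_obj:
  assumes "j < n - 1" "sqnorm (n-1) v < 1" "0 < \<mu>"
  shows "((\<lambda>r. g_obj n p \<mu> (v(j:=r)) X) has_real_derivative grad_g n p \<mu> v X j) (at (v j))"
proof -
  have "((\<lambda>r. h_mu \<mu> (qdot n (v(j:=r)) X k)) has_real_derivative
          tanh (qdot n v X k / \<mu>) * dqdot n v X j k) (at (v j))" for k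
    using DERIV_chain2[OF has_real_derivative_h_mu[OF assms(3)] has_real_derivative_qdot[OF assms(1,2)]]
    by simp
  moreover have "n \<ge> 1" using assms(1) by simp
  ultimately show ?thesis
    unfolding g_obj_eq[OF \<open>n \<ge> 1\<close>] grad_g_def by (intro DERIV_cmult DERIV_sum)
qed

lemma has_real_derivative_grad_g:
  assumes "i < n - 1" "sqnorm (n-1) v < 1" "0 < \<mu>"
  shows "((\<lambda>r. grad_g n p \<mu> (v(i:=r)) X j) has_real_derivative hess_g n p \<mu> v X i j) (at (v i))"
proof -
  have "((\<lambda>r. tanh (qdot n (v(i:=r)) X k / \<mu>) * dqdot n (v(i:=r)) X j k) has_real_derivative
          (1 - (tanh (qdot n v X k / \<mu>))\<^sup>2) / \<mu> * dqdot n v X i k * dqdot n v X j k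
          - tanh (qdot n v X k / \<mu>) * X (n-1,k) *
            ((if i = j then 1 else 0) / sqrt (1 - sqnorm (n-1) v)
             + v i * v j / sqrt (1 - sqnorm (n-1) v) ^ 3)) (at (v i))" for k
    using assms
    by (auto intro!: derivative_eq_intros has_real_derivative_qdot has_real_derivative_dqdot)
  then show ?thesis
    unfolding grad_g_def hess_g_def by (intro DERIV_cmult DERIV_sum)
qed

lemma partial_g_obj:
  assumes "j < n - 1" "sqnorm (n-1) v < 1" "0 < \<mu>"
  shows "partial (\<lambda>v. g_obj n p \<mu> v X) j v = grad_g n p \<mu> v X j"
  unfolding partial_def using has_real_derivative_g_obj[OF assms] by (rule DERIV_imp_deriv)

lemma hessian_g_obj:
  assumes "i < n - 1" "j < n - 1" "sqnorm (n-1) w < 1" "0 < \<mu>"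
  shows "hessian (\<lambda>v. g_obj n p \<mu> v X) w i j = hess_g n p \<mu> w X i j"
proof -
  define U where "U = {r. (sqnorm (n - 1) w - (w i)\<^sup>2) + r\<^sup>2 < 1}"
  have "open U" unfolding U_def by (intro open_Collect_less continuous_intros)
  moreover have "w i \<in> U" using assms by (simp add: U_def)
  moreover have "grad_g n p \<mu> (w(i:=r)) X j = partial (\<lambda>v. g_obj n p \<mu> v X) j (w(i:=r))" if "r \<in> U" for r
    using that assms partial_g_obj[of j n "w(i:=r)" \<mu> p X]
    by (simp add: U_def sqnorm_fun_upd)
  ultimately have "((\<lambda>r. partial (\<lambda>v. g_obj n p \<mu> v X) j (w(i:=r))) has_real_derivative hess_g n p \<mu> w X i j) (at (w i))"
    by (rule has_field_derivative_transform_within_open[OF has_real_derivative_grad_g[OF assms(1,3,4)]])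
  then show ?thesis
    unfolding hessian_def partial_def[of "\<lambda>v. partial _ j v"] by (rule DERIV_imp_deriv)
qed

lemma quadratic_form_rank_one_diag:
  fixes w a :: "'a \<Rightarrow> real"
  assumes "finite A"
  shows "(\<Sum>i\<in>A. \<Sum>j\<in>A. w i * (c * a i * a j - d * ((if i = j then 1 else 0) / s + w i * w j / s3)) * w j)
       = c * (\<Sum>i\<in>A. w i * a i)\<^sup>2 - d * ((\<Sum>i\<in>A. (w i)\<^sup>2) / s + (\<Sum>i\<in>A. (w i)\<^sup>2)\<^sup>2 / s3)"
proof -
  have "(\<Sum>i\<in>A. \<Sum>j\<in>A. w i * (c * a i * a j) * w j) = c * (\<Sum>i\<in>A. w i * a i)\<^sup>2"
    by (simp add: power2_eq_square sum_product sum_distrib_left mult_ac)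
  moreover have "(\<Sum>i\<in>A. \<Sum>j\<in>A. w i * (d * ((if i = j then 1 else 0) / s)) * w j) = d * ((\<Sum>i\<in>A. (w i)\<^sup>2) / s)"
  proof -
    have "(\<Sum>i\<in>A. \<Sum>j\<in>A. w i * (d * ((if i = j then 1 else 0) / s)) * w j)
        = (\<Sum>i\<in>A. \<Sum>j\<in>A. (if i = j then w i * (d / s) * w j else 0))"
      by (intro sum.cong) auto
    then show ?thesis
      using assms by (simp add: sum.delta sum_distrib_left sum_divide_distrib power2_eq_square mult_ac)
  qed
  moreover have "(\<Sum>i\<in>A. \<Sum>j\<in>A. w i * (d * (w i * w j / s3)) * w j) = d * ((\<Sum>i\<in>A. (w i)\<^sup>2)\<^sup>2 / s3)"
    by (simp add: power2_eq_square sum_product sum_distrib_left sum_divide_distrib mult_ac)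
  ultimately show ?thesis
    by (simp add: algebra_simps sum_subtractf sum.distrib)
qed

definition lin_form :: "nat \<Rightarrow> (nat \<Rightarrow> real) \<Rightarrow> (nat \<times> nat \<Rightarrow> real) \<Rightarrow> nat \<Rightarrow> real" where
  "lin_form n w X k = (\<Sum>i<n-1. w i * X (i,k)) - sqnorm (n-1) w * X (n-1,k) / sqrt (1 - sqnorm (n-1) w)"

definition curv_term :: "nat \<Rightarrow> real \<Rightarrow> (nat \<Rightarrow> real) \<Rightarrow> (nat \<times> nat \<Rightarrow> real) \<Rightarrow> nat \<Rightarrow> real" where
  "curv_term n \<mu> w X k = (1 - (tanh (qdot n w X k / \<mu>))\<^sup>2) / \<mu> * (lin_form n w X k)\<^sup>2 / sqnorm (n-1) w"

definition tanh_term :: "nat \<Rightarrow> real \<Rightarrow> (nat \<Rightarrow> real) \<Rightarrow> (nat \<times> nat \<Rightarrow> real) \<Rightarrow> nat \<Rightarrow> real" where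
  "tanh_term n \<mu> w X k = tanh (qdot n w X k / \<mu>) * X (n-1,k) / sqrt (1 - sqnorm (n-1) w) ^ 3"

lemma sum_mult_dqdot: "(\<Sum>i<n-1. w i * dqdot n w X i k) = lin_form n w X k"
  unfolding dqdot_def lin_form_def sqnorm_def
  by (simp add: algebra_simps sum_subtractf sum_distrib_left sum_divide_distrib power2_eq_square
           flip: sum_distrib_right)

lemma hess_quad_g_obj_eq:
  assumes "0 < sqnorm (n-1) w" "sqnorm (n-1) w < 1" "0 < \<mu>"
  shows "hess_quad (n-1) (\<lambda>v. g_obj n p \<mu> v X) w / sqnorm (n-1) w
       = (\<Sum>k<p. curv_term n \<mu> w X k - tanh_term n \<mu> w X k) / real p"
proof -
  define S where "S = sqnorm (n-1) w"
  define s where "s = sqrt (1 - S)"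
  have s: "0 < s" "s\<^sup>2 = 1 - S" using assms by (simp_all add: s_def S_def)
  define c where "c k = (1 - (tanh (qdot n w X k / \<mu>))\<^sup>2) / \<mu>" for k
  define d where "d k = tanh (qdot n w X k / \<mu>) * X (n-1,k)" for k
  have "hess_quad (n-1) (\<lambda>v. g_obj n p \<mu> v X) w
      = (\<Sum>i<n-1. \<Sum>j<n-1. w i * hess_g n p \<mu> w X i j * w j)"
    unfolding hess_quad_def using hessian_g_obj[OF _ _ assms(2,3)] by simp
  also have "\<dots> = (1 / real p) * (\<Sum>k<p. \<Sum>i<n-1. \<Sum>j<n-1. w i * (c k * dqdot n w X i k * dqdot n w X j k
                     - d k * ((if i = j then 1 else 0) / s + w i * w j / s ^ 3)) * w j)"
    unfolding hess_g_def c_def d_def s_def S_def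
    by (simp add: sum_distrib_left sum_distrib_right mult_ac sum.swap[of _ "{..<p}"])
  also have "\<dots> = (1 / real p) * (\<Sum>k<p. c k * (lin_form n w X k)\<^sup>2 - d k * (S / s + S\<^sup>2 / s ^ 3))"
    unfolding quadratic_form_rank_one_diag[OF finite_lessThan] sum_mult_dqdot
    by (simp add: S_def sqnorm_def)
  also have "\<dots> = (1 / real p) * (\<Sum>k<p. curv_term n \<mu> w X k - tanh_term n \<mu> w X k) * S"
  proof -
    have "S / s = S * s\<^sup>2 / s ^ 3" using s(1) by (simp add: power2_eq_square power3_eq_cube)
    then have "S / s + S\<^sup>2 / s ^ 3 = S * (s\<^sup>2 + S) / s ^ 3"
      by (simp add: add_divide_distrib algebra_simps power2_eq_square)
    also have "\<dots> = S / s ^ 3" using s by simp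
    finally have "S / s + S\<^sup>2 / s ^ 3 = S / s ^ 3" .
    moreover have "c k * (lin_form n w X k)\<^sup>2 - d k * (S / s ^ 3)
        = (curv_term n \<mu> w X k - tanh_term n \<mu> w X k) * S" for k
      using assms(1,3) unfolding curv_term_def tanh_term_def c_def d_def S_def s_def
      by (simp add: field_simps)
    ultimately show ?thesis by (simp add: sum_distrib_right sum_distrib_left mult_ac)
  qed
  finally show ?thesis using assms(1) unfolding S_def by simp
qed

section \<open>Moments of the Bernoulli-Gaussian law\<close>

lemma prob_space_std_normal: "prob_space (density lborel std_normal_density)"
  using prob_space_normal_density[of 1 0] by simp

lemma sets_BG[simp, measurable_cong]: "sets (BG \<theta>) = sets borel"
  by (simp add: BG_def)

lemma prob_space_BG:
  assumes "0 \<le> \<theta>" "\<theta> \<le> 1"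
  shows "prob_space (BG \<theta>)"
proof -
  interpret N: prob_space "density lborel std_normal_density" by (rule prob_space_std_normal)
  interpret B: prob_space "measure_pmf (bernoulli_pmf \<theta>)" by (rule prob_space_measure_pmf)
  interpret P: pair_prob_space "measure_pmf (bernoulli_pmf \<theta>)" "density lborel std_normal_density" ..
  show ?thesis unfolding BG_def
    by (intro P.prob_space_distr) measurable
qed

lemma prob_space_PiM_BG: "0 \<le> \<theta> \<Longrightarrow> \<theta> \<le> 1 \<Longrightarrow> prob_space (PiM I (\<lambda>_. BG \<theta>))"
  by (rule prob_space_PiM) (use prob_space_BG in auto)

lemma measurable_PiM_BG_component:
  "i \<in> I \<Longrightarrow> (\<lambda>x. x i) \<in> borel_measurable (PiM I (\<lambda>_. BG \<theta>))"
  using measurable_component_singleton[of i I "\<lambda>_. BG \<theta>"] by (simp add: measurable_cong_sets[OF refl sets_BG])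

lemma nn_integral_BG:
  assumes "0 \<le> \<theta>" "\<theta> \<le> 1" and f[measurable]: "f \<in> borel_measurable borel"
  shows "(\<integral>\<^sup>+ y. f y \<partial>BG \<theta>) =
     ennreal \<theta> * (\<integral>\<^sup>+ x. ennreal (std_normal_density x) * f x \<partial>lborel) + ennreal (1 - \<theta>) * f 0"
proof -
  interpret N: prob_space "density lborel std_normal_density" by (rule prob_space_std_normal)
  have "(\<integral>\<^sup>+ y. f y \<partial>BG \<theta>) = (\<integral>\<^sup>+ bg. f ((\<lambda>(b, g). (if b then 1 else 0) * g) bg)
          \<partial>(measure_pmf (bernoulli_pmf \<theta>) \<Otimes>\<^sub>M density lborel std_normal_density))"
    unfolding BG_def by (rule nn_integral_distr) measurable
  also have "\<dots> = (\<integral>\<^sup>+ b. \<integral>\<^sup>+ g. f ((if b then 1 else 0) * g) \<partial>density lborel std_normal_density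
                    \<partial>measure_pmf (bernoulli_pmf \<theta>))"
  proof -
    have meas: "(\<lambda>bg. f ((\<lambda>(b, g). (if b then 1 else 0) * g) bg)) \<in> borel_measurable
        (measure_pmf (bernoulli_pmf \<theta>) \<Otimes>\<^sub>M density lborel std_normal_density)"
      by measurable
    show ?thesis using N.nn_integral_fst[OF meas] by simp
  qed
  also have "\<dots> = (\<integral>\<^sup>+ g. f g \<partial>density lborel std_normal_density) * ennreal \<theta>
                 + (\<integral>\<^sup>+ g. f 0 \<partial>density lborel std_normal_density) * ennreal (1 - \<theta>)"
    using assms by (subst nn_integral_bernoulli_pmf) auto
  also have "(\<integral>\<^sup>+ g. f 0 \<partial>density lborel std_normal_density) = f 0"
    using N.emeasure_space_1 by simp
  also have "(\<integral>\<^sup>+ g. f g \<partial>density lborel std_normal_density) =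
       (\<integral>\<^sup>+ x. ennreal (std_normal_density x) * f x \<partial>lborel)"
    by (subst nn_integral_density) auto
  finally show ?thesis by (simp add: mult_ac)
qed

text \<open>The moment \<open>E G^(2k) = (2k - 1)!!\<close> of a standard Gaussian \<open>G\<close>.\<close>

definition gauss_moment :: "nat \<Rightarrow> real" where "gauss_moment k = fact (2*k) / (2^k * fact k)"

lemma gauss_moment_pos: "gauss_moment k > 0" by (simp add: gauss_moment_def)

lemma gauss_moment_Suc: "gauss_moment (Suc m) = (2 * real m + 1) * gauss_moment m"
proof -
  have "fact (2 * Suc m) = (2 * real m + 2) * ((2 * real m + 1) * fact (2 * m))"
    by (simp add: algebra_simps)
  moreover have "2 ^ Suc m * fact (Suc m) = (2 * real m + 2) * (2 ^ m * fact m)"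
    by (simp add: algebra_simps)
  ultimately show ?thesis
    unfolding gauss_moment_def by (simp only: mult_divide_mult_cancel_left_if) simp
qed

lemma gauss_moment_le: "m \<ge> 1 \<Longrightarrow> gauss_moment m \<le> 2^(m-1) * fact m"
proof (induction m rule: dec_induct)
  case base then show ?case by (simp add: gauss_moment_def)
next
  case (step m)
  have "gauss_moment (Suc m) = (2 * real m + 1) * gauss_moment m" by (rule gauss_moment_Suc)
  also have "\<dots> \<le> (2 * real m + 1) * (2^(m-1) * fact m)"
    using step.IH by (intro mult_left_mono) auto
  also have "\<dots> \<le> (2 * real m + 2) * (2^(m-1) * fact m)"
    by (intro mult_right_mono) auto
  also have "\<dots> = 2^(Suc m - 1) * fact (Suc m)"
    using step.hyps by (cases m) (auto simp: algebra_simps)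
  finally show ?case .
qed

lemma gauss_moment_scaled_le:
  assumes "m \<ge> 1" "0 \<le> c" "2 * c \<le> R"
  shows "c ^ m * gauss_moment m \<le> fact m / 2 * R ^ m"
proof -
  have "c ^ m * gauss_moment m \<le> c ^ m * (2 ^ (m - 1) * fact m)"
    using assms by (intro mult_left_mono gauss_moment_le) auto
  also have "\<dots> = fact m / 2 * (2 * c) ^ m"
    using assms(1) by (cases m) (simp_all add: power_mult_distrib)
  also have "\<dots> \<le> fact m / 2 * R ^ m"
    using assms by (intro mult_left_mono power_mono) auto
  finally show ?thesis .
qed

lemma sum_atMost_even_odd:
  fixes F :: "nat \<Rightarrow> 'a::comm_monoid_add"
  shows "(\<Sum>j\<le>2*m. F j) = (\<Sum>k\<le>m. F (2*k)) + (\<Sum>k<m. F (2*k+1))"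
proof (induction m)
  case 0 then show ?case by simp
next
  case (Suc m)
  have "{..2 * Suc m} = insert (Suc (Suc (2*m))) (insert (Suc (2*m)) {..2*m})" by auto
  then have "(\<Sum>j\<le>2*Suc m. F j) = F (Suc (Suc (2*m))) + F (Suc (2*m)) + (\<Sum>j\<le>2*m. F j)"
    by (simp add: add_ac)
  then show ?case using Suc by (simp add: add_ac)
qed

lemma std_normal_binomial_moment:
  fixes b c :: real and m :: nat
  defines "P \<equiv> (\<lambda>y. std_normal_density y * (c + b*y)^(2*m))"
  shows "integrable lborel P"
    and "(\<integral>y. P y \<partial>lborel) = (\<Sum>k\<le>m. real (2*m choose (2*k)) * c^(2*(m-k)) * b^(2*k) * gauss_moment k)"
proof -
  have P: "P = (\<lambda>y. \<Sum>j\<le>2*m. (real (2*m choose j) * b^j * c^(2*m-j)) * (std_normal_density y * y^j))"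
  proof
    fix y
    have "(c + b*y)^(2*m) = (b*y + c)^(2*m)" by (simp add: add.commute)
    also have "\<dots> = (\<Sum>j\<le>2*m. real (2*m choose j) * (b*y)^j * c^(2*m-j))"
      by (rule binomial_ring)
    finally show "P y = (\<Sum>j\<le>2*m. (real (2*m choose j) * b^j * c^(2*m-j)) * (std_normal_density y * y^j))"
      unfolding P_def by (simp add: sum_distrib_left power_mult_distrib mult_ac)
  qed
  show "integrable lborel P"
    unfolding P by (simp add: integrable_std_normal_moment)
  have "(\<integral>y. P y \<partial>lborel) = (\<Sum>j\<le>2*m. (real (2*m choose j) * b^j * c^(2*m-j)) *
            (\<integral>y. std_normal_density y * y^j \<partial>lborel))"
    unfolding P
    by (subst Bochner_Integration.integral_sum) (auto simp: integrable_std_normal_moment)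
  also have "\<dots> = (\<Sum>k\<le>m. real (2*m choose (2*k)) * c^(2*(m-k)) * b^(2*k) * gauss_moment k)"
    unfolding sum_atMost_even_odd integral_std_normal_moment_even integral_std_normal_moment_odd
    by (simp add: gauss_moment_def diff_mult_distrib mult_ac)
  finally show "(\<integral>y. P y \<partial>lborel) = (\<Sum>k\<le>m. real (2*m choose (2*k)) * c^(2*(m-k)) * b^(2*k) * gauss_moment k)" .
qed

lemma nn_integral_BG_binomial_power_le:
  assumes "0 \<le> \<theta>" "\<theta> \<le> 1"
  shows "(\<integral>\<^sup>+ y. ennreal ((c + b*y)^(2*m)) \<partial>BG \<theta>)
        \<le> ennreal (\<Sum>k\<le>m. real (2*m choose (2*k)) * c^(2*(m-k)) * b^(2*k) * gauss_moment k)"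
proof -
  define E where "E = (\<Sum>k\<le>m. real (2*m choose (2*k)) * c^(2*(m-k)) * b^(2*k) * gauss_moment k)"
  have nn: "0 \<le> real (2*m choose (2*k)) * c^(2*(m-k)) * b^(2*k) * gauss_moment k" for k
    using gauss_moment_pos[of k] by (intro mult_nonneg_nonneg zero_le_even_power') auto
  have cE: "c^(2*m) \<le> E"
  proof -
    have "c^(2*m) = real (2*m choose (2*0)) * c^(2*(m-0)) * b^(2*0) * gauss_moment 0"
      by (simp add: gauss_moment_def)
    also have "\<dots> \<le> E" unfolding E_def
      by (rule member_le_sum[of 0 "{..m}"]) (use nn in auto)
    finally show ?thesis .
  qed
  have E0: "0 \<le> E" using cE zero_le_even_power'[of c m] by linarith
  have "(\<integral>\<^sup>+ x. ennreal (std_normal_density x) * ennreal ((c + b*x)^(2*m)) \<partial>lborel)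
      = (\<integral>\<^sup>+ x. ennreal (std_normal_density x * (c + b*x)^(2*m)) \<partial>lborel)"
    by (intro nn_integral_cong) (simp add: ennreal_mult zero_le_even_power')
  also have "\<dots> = ennreal E"
    unfolding E_def
    by (subst nn_integral_eq_integral)
       (auto simp: std_normal_binomial_moment[of c b m] zero_le_even_power' intro!: mult_nonneg_nonneg)
  finally have I: "(\<integral>\<^sup>+ x. ennreal (std_normal_density x) * ennreal ((c + b*x)^(2*m)) \<partial>lborel) = ennreal E" .
  have "(\<integral>\<^sup>+ y. ennreal ((c + b*y)^(2*m)) \<partial>BG \<theta>) = ennreal \<theta> * ennreal E + ennreal (1-\<theta>) * ennreal (c^(2*m))"
    using assms by (subst nn_integral_BG) (auto simp: I)
  also have "\<dots> = ennreal (\<theta> * E + (1-\<theta>) * c^(2*m))"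
    using assms E0 by (simp add: ennreal_mult ennreal_plus[symmetric] zero_le_even_power')
  also have "\<dots> \<le> ennreal E"
  proof (rule ennreal_leI)
    have "(1-\<theta>) * c^(2*m) \<le> (1-\<theta>) * E" using assms cE by (intro mult_left_mono) auto
    then show "\<theta> * E + (1-\<theta>) * c^(2*m) \<le> E" by (simp add: algebra_simps)
  qed
  finally show ?thesis unfolding E_def .
qed

lemma two_pow_fact_ge: "j \<ge> 1 \<Longrightarrow> (2::real) \<le> 2^j * fact j"
proof -
  assume "j \<ge> 1"
  then have "(2::real) \<le> 2^j" using power_increasing[of 1 j "2::real"] by simp
  moreover have "(1::real) \<le> fact j" by simp
  ultimately show ?thesis using mult_mono[of 2 "2^j" 1 "fact j :: real"] by simp
qed

lemma odd_fact_ineq: "j \<ge> 1 \<Longrightarrow> 2 * (2^j * fact j) \<le> (fact (2*j+1) :: real)"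
proof (induction j rule: dec_induct)
  case base then show ?case by (simp add: eval_nat_numeral)
next
  case (step j)
  have "2 * (2^Suc j * fact (Suc j)) = (2 * (real j+1)) * (2 * (2^j * fact j) :: real)"
    by (simp add: algebra_simps)
  also have "\<dots> \<le> (2 * (real j+1)) * fact (2*j+1)"
    using step.IH by (intro mult_left_mono) auto
  also have "\<dots> \<le> (2*real j+3) * ((2 * (real j+1)) * fact (2*j+1))"
    by (simp add: algebra_simps)
  also have "\<dots> = fact (2 * Suc j + 1)"
    by (simp add: algebra_simps fact_Suc)
  finally show ?case .
qed

lemma std_normal_abs_moment_le:
  assumes "m \<ge> 2"
  shows "(\<integral>y. std_normal_density y * \<bar>y\<bar>^m \<partial>lborel) \<le> fact m / 2"
proof (cases "even m")
  case True
  then obtain j where j: "m = 2*j" by auto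
  with assms have j1: "j \<ge> 1" by simp
  have "(\<integral>y. std_normal_density y * \<bar>y\<bar>^m \<partial>lborel) = (\<integral>y. std_normal_density y * y^(2*j) \<partial>lborel)"
    unfolding j by (simp add: power_even_abs)
  also have "\<dots> = fact (2*j) / (2^j * fact j)" by (rule integral_std_normal_moment_even)
  also have "\<dots> \<le> fact (2*j) / 2"
    using two_pow_fact_ge[OF j1] by (intro divide_left_mono) auto
  finally show ?thesis unfolding j .
next
  case False
  then obtain j where j: "m = 2*j+1" using oddE by blast
  with assms have j1: "j \<ge> 1" by simp
  have "(\<integral>y. std_normal_density y * \<bar>y\<bar>^m \<partial>lborel) = sqrt (2/pi) * 2^j * fact j"
    unfolding j by (rule integral_std_normal_moment_abs_odd)
  also have "\<dots> \<le> 1 * (2^j * fact j)"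
  proof -
    have "2/pi \<le> 1" using pi_gt3 by simp
    then have "sqrt (2/pi) \<le> 1" by simp
    then show ?thesis by (simp add: mult.assoc mult_right_mono)
  qed
  also have "\<dots> \<le> fact (2*j+1) / 2" using odd_fact_ineq[OF j1] by simp
  finally show ?thesis unfolding j .
qed

lemma nn_integral_BG_abs_power_le:
  assumes "0 \<le> \<theta>" "\<theta> \<le> 1" "m \<ge> 2"
  shows "(\<integral>\<^sup>+ y. ennreal (\<bar>y\<bar>^m) \<partial>BG \<theta>) \<le> ennreal (fact m / 2)"
proof -
  define A where "A = (\<integral>y. std_normal_density y * \<bar>y\<bar>^m \<partial>lborel)"
  have A0: "0 \<le> A" unfolding A_def by (intro integral_nonneg_AE) auto
  have I: "(\<integral>\<^sup>+ x. ennreal (std_normal_density x) * ennreal (\<bar>x\<bar>^m) \<partial>lborel) = ennreal A"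
  proof -
    have "(\<integral>\<^sup>+ x. ennreal (std_normal_density x) * ennreal (\<bar>x\<bar>^m) \<partial>lborel)
      = (\<integral>\<^sup>+ x. ennreal (std_normal_density x * \<bar>x\<bar>^m) \<partial>lborel)"
      by (intro nn_integral_cong) (simp add: ennreal_mult)
    also have "\<dots> = ennreal A"
      unfolding A_def
      by (subst nn_integral_eq_integral) (auto simp: integrable_std_normal_moment_abs)
    finally show ?thesis .
  qed
  have "(\<integral>\<^sup>+ y. ennreal (\<bar>y\<bar>^m) \<partial>BG \<theta>) = ennreal \<theta> * ennreal A"
    using assms by (subst nn_integral_BG) (auto simp: I)
  also have "\<dots> = ennreal (\<theta> * A)" using assms A0 by (simp add: ennreal_mult)
  also have "\<dots> \<le> ennreal (fact m / 2)"
  proof (rule ennreal_leI)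
    have "\<theta> * A \<le> 1 * A" using assms A0 by (intro mult_right_mono) auto
    also have "\<dots> \<le> fact m / 2" using std_normal_abs_moment_le[OF assms(3)] by (simp add: A_def)
    finally show "\<theta> * A \<le> fact m / 2" .
  qed
  finally show ?thesis .
qed

lemma gauss_moment_binomial:
  assumes "k \<le> m"
  shows "real (2*m choose (2*k)) * gauss_moment k * gauss_moment (m-k) = gauss_moment m * real (m choose k)"
proof -
  have a: "2*m - 2*k = 2*(m-k)" by simp
  have p: "(2::real)^k * 2^(m-k) = 2^m" using assms by (simp add: power_add[symmetric])
  have "real (2*m choose (2*k)) = fact (2*m) / (fact (2*k) * fact (2*(m-k)))"
    using assms by (subst binomial_fact) (auto simp: a)
  moreover have "real (m choose k) = fact m / (fact k * fact (m-k))"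
    using assms by (rule binomial_fact)
  ultimately show ?thesis
    unfolding gauss_moment_def using p
    by (simp add: field_simps)
qed

lemma sum_binomial_gauss_moment:
  "(\<Sum>k\<le>m. real (2*m choose (2*k)) * a^(2*k) * gauss_moment k * (A^(m-k) * gauss_moment (m-k)))
     = gauss_moment m * (a\<^sup>2 + A)^m"
proof -
  have "real (2*m choose (2*k)) * a^(2*k) * gauss_moment k * (A^(m-k) * gauss_moment (m-k))
      = gauss_moment m * (real (m choose k) * (a\<^sup>2)^k * A^(m-k))" if "k \<le> m" for k
  proof -
    have "real (2*m choose (2*k)) * a^(2*k) * gauss_moment k * (A^(m-k) * gauss_moment (m-k))
        = (real (2*m choose (2*k)) * gauss_moment k * gauss_moment (m-k)) * (a^(2*k) * A^(m-k))"
      by (simp only: mult_ac)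
    also have "\<dots> = gauss_moment m * real (m choose k) * ((a\<^sup>2)^k * A^(m-k))"
      by (simp only: gauss_moment_binomial[OF that] power_mult)
    finally show ?thesis by (simp only: mult_ac)
  qed
  then show ?thesis
    unfolding binomial_ring sum_distrib_left by (intro sum.cong) auto
qed

lemma product_prob_space_BG: "0 \<le> \<theta> \<Longrightarrow> \<theta> \<le> 1 \<Longrightarrow> product_prob_space (\<lambda>_. BG \<theta>)"
  unfolding product_prob_space_def product_prob_space_axioms_def product_sigma_finite_def
  using prob_space_BG by (auto simp: prob_space_imp_sigma_finite)

lemma nn_integral_nonneg_combination_le:
  fixes f :: "'k \<Rightarrow> 'a \<Rightarrow> real"
  assumes "finite K" and [measurable]: "\<And>k. k \<in> K \<Longrightarrow> f k \<in> borel_measurable N"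
    and "\<And>k x. k \<in> K \<Longrightarrow> 0 \<le> f k x" "\<And>k. k \<in> K \<Longrightarrow> 0 \<le> c k" "\<And>k. k \<in> K \<Longrightarrow> 0 \<le> B k"
    and bound: "\<And>k. k \<in> K \<Longrightarrow> (\<integral>\<^sup>+ x. ennreal (f k x) \<partial>N) \<le> ennreal (B k)"
  shows "(\<integral>\<^sup>+ x. ennreal (\<Sum>k\<in>K. c k * f k x) \<partial>N) \<le> ennreal (\<Sum>k\<in>K. c k * B k)"
proof -
  have "(\<integral>\<^sup>+ x. ennreal (\<Sum>k\<in>K. c k * f k x) \<partial>N) = (\<integral>\<^sup>+ x. (\<Sum>k\<in>K. ennreal (c k) * ennreal (f k x)) \<partial>N)"
    using assms by (intro nn_integral_cong) (simp add: ennreal_mult sum_nonneg flip: sum_ennreal)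
  also have "\<dots> = (\<Sum>k\<in>K. ennreal (c k) * (\<integral>\<^sup>+ x. ennreal (f k x) \<partial>N))"
    using assms by (subst nn_integral_sum) (auto simp: nn_integral_cmult)
  also have "\<dots> \<le> (\<Sum>k\<in>K. ennreal (c k) * ennreal (B k))"
    using bound by (intro sum_mono mult_left_mono) auto
  also have "\<dots> = ennreal (\<Sum>k\<in>K. c k * B k)"
    using assms by (simp add: ennreal_mult sum_nonneg flip: sum_ennreal)
  finally show ?thesis .
qed

lemma nn_integral_BG_linear_form_power_le:
  fixes a :: "'i \<Rightarrow> real"
  assumes th: "0 \<le> \<theta>" "\<theta> \<le> 1" and I: "finite I"
  shows "(\<integral>\<^sup>+ x. ennreal ((\<Sum>c\<in>I. a c * x c)^(2*m)) \<partial>PiM I (\<lambda>_. BG \<theta>))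
          \<le> ennreal ((\<Sum>c\<in>I. (a c)\<^sup>2)^m * gauss_moment m)"
  using I
proof (induction I arbitrary: m rule: finite_induct)
  case empty
  interpret P: prob_space "PiM {} (\<lambda>_. BG \<theta>)"
    by (rule prob_space_PiM) (use prob_space_BG[OF th] in auto)
  show ?case
    by (cases m) (auto simp: gauss_moment_def P.emeasure_space_1)
next
  case (insert i I)
  interpret PP: product_prob_space "\<lambda>_. BG \<theta>" by (rule product_prob_space_BG[OF th])
  define L where "L x = (\<Sum>c\<in>I. a c * x c)" for x :: "'i \<Rightarrow> real"
  define A where "A = (\<Sum>c\<in>I. (a c)\<^sup>2)"
  define co where "co k = real (2*m choose (2*k)) * (a i)^(2*k) * gauss_moment k" for k
  have co0: "0 \<le> co k" for k unfolding co_def using gauss_moment_pos[of k]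
    by (intro mult_nonneg_nonneg zero_le_even_power') auto
  have A0: "0 \<le> A" unfolding A_def by (intro sum_nonneg) auto
  have "(\<integral>\<^sup>+ x. ennreal ((\<Sum>c\<in>insert i I. a c * x c)^(2*m)) \<partial>PiM (insert i I) (\<lambda>_. BG \<theta>))
      = (\<integral>\<^sup>+ x. (\<integral>\<^sup>+ y. ennreal ((\<Sum>c\<in>insert i I. a c * (x(i:=y)) c)^(2*m)) \<partial>BG \<theta>) \<partial>PiM I (\<lambda>_. BG \<theta>))"
    by (rule PP.product_nn_integral_insert) (use insert in \<open>auto\<close>, measurable)
  also have "\<dots> = (\<integral>\<^sup>+ x. (\<integral>\<^sup>+ y. ennreal ((L x + a i * y)^(2*m)) \<partial>BG \<theta>) \<partial>PiM I (\<lambda>_. BG \<theta>))"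
  proof -
    have "(\<Sum>c\<in>insert i I. a c * (x(i:=y)) c) = L x + a i * y" for x y
    proof -
      have "(\<Sum>c\<in>I. a c * (x(i:=y)) c) = L x"
        unfolding L_def using insert(2) by (intro sum.cong) auto
      then show ?thesis using insert by (simp add: add.commute)
    qed
    then show ?thesis by simp
  qed
  also have "\<dots> \<le> (\<integral>\<^sup>+ x. ennreal (\<Sum>k\<le>m. co k * (L x)^(2*(m-k))) \<partial>PiM I (\<lambda>_. BG \<theta>))"
    using nn_integral_BG_binomial_power_le[OF th, of "L _" "a i" m]
    by (intro nn_integral_mono) (simp add: co_def mult_ac)
  also have "\<dots> \<le> ennreal (\<Sum>k\<le>m. co k * (A^(m-k) * gauss_moment (m-k)))"
    using co0 A0 gauss_moment_pos
    by (intro nn_integral_nonneg_combination_le) (auto simp: L_def A_def insert.IH less_imp_le)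
  also have "(\<Sum>k\<le>m. co k * (A^(m-k) * gauss_moment (m-k))) = gauss_moment m * ((a i)\<^sup>2 + A)^m"
    unfolding co_def by (rule sum_binomial_gauss_moment)
  also have "\<dots> = (\<Sum>c\<in>insert i I. (a c)\<^sup>2)^m * gauss_moment m"
    using insert by (simp add: A_def mult.commute)
  finally show ?case .
qed

section \<open>Bernstein's inequality\<close>

lemma exp_tail_sums:
  fixes y :: real
  shows "(\<lambda>n. y^(n+2) / fact (n+2)) sums (exp y - 1 - y)"
proof -
  have "(\<lambda>n. y^n / fact n) sums exp y"
    using exp_converges[of y] by (simp add: divide_inverse mult.commute)
  then have "(\<lambda>n. y^(n+2) / fact (n+2)) sums (exp y - (\<Sum>n<2. y^n / fact n))"
    using sums_iff_shift'[of "\<lambda>n. y^n / fact n" 2 "exp y"] by simp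
  moreover have "exp y - (\<Sum>n<2. y^n / fact n) = exp y - 1 - y" by (simp add: eval_nat_numeral)
  ultimately show ?thesis by simp
qed

lemma exp_minus_one_minus_le_abs: "exp (z::real) - 1 - z \<le> exp \<bar>z\<bar> - 1 - \<bar>z\<bar>"
proof (rule sums_le[OF _ exp_tail_sums exp_tail_sums])
  fix n
  have "z^(n+2) \<le> \<bar>z\<bar>^(n+2)" by (metis power_abs abs_ge_self)
  then show "z^(n+2) / fact (n+2) \<le> \<bar>z\<bar>^(n+2) / fact (n+2)"
    by (intro divide_right_mono) auto
qed

lemma bernstein_exponent_eq:
  fixes V R s :: real
  assumes "0 < V" "0 < V + R * s"
  shows "V * (s / (V + R * s))\<^sup>2 / (2 * (1 - s / (V + R * s) * R)) - s / (V + R * s) * s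
           = - (s\<^sup>2 / (2*V + 2*R * s))"
proof -
  define D where "D = V + R * s"
  have D: "0 < D" "2*V + 2*R * s = 2 * D" using assms(2) by (simp_all add: D_def)
  have "1 - s / D * R = V / D" using D(1) by (simp add: D_def field_simps)
  then have "V * (s / D)\<^sup>2 / (2 * (1 - s / D * R)) = V * (s / D)\<^sup>2 / (2 * (V / D))" by simp
  also have "\<dots> = s\<^sup>2 / (2 * D)"
    using assms(1) D(1) by (simp add: field_simps power2_eq_square)
  finally have "V * (s / D)\<^sup>2 / (2 * (1 - s / D * R)) = s\<^sup>2 / (2 * D)" .
  moreover have "s\<^sup>2 / (2 * D) - s / D * s = - (s\<^sup>2 / (2 * D))"
    using D(1) by (simp add: field_simps power2_eq_square)
  ultimately show ?thesis unfolding D_def[symmetric] D(2) by simp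
qed

context prob_space
begin

lemma integrable_of_second_moment:
  fixes X :: "'a \<Rightarrow> real"
  assumes [measurable]: "X \<in> borel_measurable M"
    and "(\<integral>\<^sup>+ x. ennreal (\<bar>X x\<bar>^2) \<partial>M) \<le> ennreal V"
  shows "integrable M X"
proof (rule square_integrable_imp_integrable)
  show "integrable M (\<lambda>x. X x ^ 2)"
    using assms(2) by (intro integrableI_bounded) (auto simp: order.strict_trans1)
qed simp

lemma nn_integral_exp_abs_tail_le:
  fixes X :: "'a \<Rightarrow> real"
  assumes [measurable]: "X \<in> borel_measurable M"
    and V: "0 \<le> V" and R: "0 < R" and l: "0 < l" "l * R < 1"
    and mom: "\<And>m. m \<ge> 2 \<Longrightarrow> (\<integral>\<^sup>+ x. ennreal (\<bar>X x\<bar>^m) \<partial>M) \<le> ennreal (fact m / 2 * V * R^(m-2))"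
  shows "(\<integral>\<^sup>+ x. ennreal (exp (l * \<bar>X x\<bar>) - 1 - l * \<bar>X x\<bar>) \<partial>M) \<le> ennreal (V * l\<^sup>2 / (2 * (1 - l*R)))"
proof -
  have summand: "(\<integral>\<^sup>+ x. ennreal ((l * \<bar>X x\<bar>)^(n+2) / fact (n+2)) \<partial>M) \<le> ennreal (V * l\<^sup>2 / 2 * (l*R)^n)" for n
  proof -
    have "(\<integral>\<^sup>+ x. ennreal ((l * \<bar>X x\<bar>)^(n+2) / fact (n+2)) \<partial>M)
        = ennreal (l^(n+2) / fact (n+2)) * (\<integral>\<^sup>+ x. ennreal (\<bar>X x\<bar>^(n+2)) \<partial>M)"
      using l by (subst nn_integral_cmult[symmetric])
                 (auto intro!: nn_integral_cong simp: ennreal_mult[symmetric] power_mult_distrib)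
    also have "\<dots> \<le> ennreal (l^(n+2) / fact (n+2)) * ennreal (fact (n+2) / 2 * V * R^n)"
      using mom[of "n+2"] by (intro mult_left_mono) auto
    also have "\<dots> = ennreal (V * l\<^sup>2 / 2 * (l*R)^n)"
    proof -
      have g: "l^(n+2) / F * (F / 2 * V * R^n) = V * l\<^sup>2 / 2 * (l*R)^n" if "F \<noteq> 0" for F :: real
        using that by (simp add: field_simps power_mult_distrib power_add power2_eq_square)
      have "ennreal (l^(n+2) / fact (n+2)) * ennreal (fact (n+2) / 2 * V * R^n)
          = ennreal (l^(n+2) / fact (n+2) * (fact (n+2) / 2 * V * R^n))"
        using l V R by (subst ennreal_mult) auto
      then show ?thesis by (simp only: g fact_nonzero not_False_eq_True)
    qed
    finally show ?thesis .
  qed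
  have "(\<integral>\<^sup>+ x. ennreal (exp (l * \<bar>X x\<bar>) - 1 - l * \<bar>X x\<bar>) \<partial>M)
      = (\<integral>\<^sup>+ x. (\<Sum>n. ennreal ((l * \<bar>X x\<bar>)^(n+2) / fact (n+2))) \<partial>M)"
    using l by (intro nn_integral_cong suminf_ennreal_eq[symmetric] exp_tail_sums) auto
  also have "\<dots> = (\<Sum>n. (\<integral>\<^sup>+ x. ennreal ((l * \<bar>X x\<bar>)^(n+2) / fact (n+2)) \<partial>M))"
    by (rule nn_integral_suminf) measurable
  also have "\<dots> \<le> (\<Sum>n. ennreal (V * l\<^sup>2 / 2 * (l*R)^n))"
    by (intro suminf_le summand) auto
  also have "\<dots> = ennreal (V * l\<^sup>2 / 2 * (1 / (1 - l*R)))"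
    using l R V by (intro suminf_ennreal_eq sums_mult geometric_sums) (auto simp: abs_mult)
  finally show ?thesis by simp
qed

lemma nn_integral_exp_centered_le:
  fixes X :: "'a \<Rightarrow> real"
  assumes Xm[measurable]: "X \<in> borel_measurable M"
    and V: "0 \<le> V" and R: "0 < R" and l: "0 < l" "l * R < 1"
    and mom: "\<And>m. m \<ge> 2 \<Longrightarrow> (\<integral>\<^sup>+ x. ennreal (\<bar>X x\<bar>^m) \<partial>M) \<le> ennreal (fact m / 2 * V * R^(m-2))"
  shows "(\<integral>\<^sup>+ x. ennreal (exp (l * (X x - expectation X))) \<partial>M) \<le> ennreal (exp (V * l\<^sup>2 / (2 * (1 - l*R))))"
proof -
  define c where "c = V * l\<^sup>2 / (2 * (1 - l*R))"
  define \<psi> where "\<psi> x = exp (l * \<bar>X x\<bar>) - 1 - l * \<bar>X x\<bar>" for x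
  define e where "e = expectation X"
  have c0: "0 \<le> c" unfolding c_def using V l by (intro divide_nonneg_pos mult_nonneg_nonneg) auto
  have intX: "integrable M X"
    by (rule integrable_of_second_moment[OF Xm, of "V"]) (use mom[of 2] in simp)
  have psi0: "0 \<le> \<psi> x" for x
    unfolding \<psi>_def using exp_ge_add_one_self[of "l * \<bar>X x\<bar>"] by linarith
  have [measurable]: "\<psi> \<in> borel_measurable M" unfolding \<psi>_def by measurable
  have Ipsi: "(\<integral>\<^sup>+ x. ennreal (\<psi> x) \<partial>M) \<le> ennreal c"
    unfolding \<psi>_def c_def by (rule nn_integral_exp_abs_tail_le[OF Xm V R l mom])
  have intpsi: "integrable M \<psi>"
    using Ipsi psi0 by (intro integrableI_bounded) (auto simp: order.strict_trans1)
  have Epsi: "expectation \<psi> \<le> c"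
    using Ipsi intpsi psi0 c0 by (simp add: nn_integral_eq_integral ennreal_le_iff)
  define B where "B x = exp (-l*e) * (1 + l * X x + \<psi> x)" for x
  \<comment> \<open>\<open>exp z \<le> 1 + z + (exp \<bar>z\<bar> - 1 - \<bar>z\<bar>)\<close> dominates the centred exponential by an integrable function\<close>
  have ptw: "exp (l * (X x - e)) \<le> B x" for x
  proof -
    have "exp (l * X x) - 1 - l * X x \<le> \<psi> x"
      unfolding \<psi>_def using exp_minus_one_minus_le_abs[of "l * X x"] l by (simp add: abs_mult)
    then have "exp (-l*e) * exp (l * X x) \<le> B x" unfolding B_def by (intro mult_left_mono) auto
    then show ?thesis by (simp add: exp_add[symmetric] algebra_simps)
  qed
  have B0: "0 \<le> B x" for x using ptw[of x] exp_gt_zero[of "l * (X x - e)"] by linarith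
  have intB: "integrable M B" unfolding B_def using intX intpsi by auto
  have "(\<integral>\<^sup>+ x. ennreal (exp (l * (X x - expectation X))) \<partial>M) \<le> (\<integral>\<^sup>+ x. ennreal (B x) \<partial>M)"
    unfolding e_def[symmetric] by (intro nn_integral_mono ennreal_leI ptw)
  also have "\<dots> = ennreal (expectation B)"
    using intB B0 by (subst nn_integral_eq_integral) auto
  also have "expectation B = exp (-l*e) * (1 + l * e + expectation \<psi>)"
    unfolding B_def e_def using intX intpsi by (simp add: prob_space)
  also have "\<dots> \<le> exp (-l*e) * exp (l * e + c)"
  proof (rule mult_left_mono)
    show "1 + l * e + expectation \<psi> \<le> exp (l * e + c)"
      using Epsi exp_ge_add_one_self[of "l * e + c"] by linarith
  qed simp
  also have "exp (-l*e) * exp (l * e + c) = exp c" by (simp add: exp_add[symmetric])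
  finally show ?thesis unfolding c_def by (simp add: ennreal_leI)
qed

lemma bernstein_inequality:
  fixes X :: "'i \<Rightarrow> 'a \<Rightarrow> real"
  assumes I: "finite I" and ind: "indep_vars (\<lambda>_. borel) X I"
    and V: "0 < V" and R: "0 < R" and s: "0 < s"
    and mom: "\<And>i m. i \<in> I \<Longrightarrow> m \<ge> 2 \<Longrightarrow>
                (\<integral>\<^sup>+ x. ennreal (\<bar>X i x\<bar>^m) \<partial>M) \<le> ennreal (fact m / 2 * V * R^(m-2))"
  shows "prob {x \<in> space M. real (card I) * s \<le> (\<Sum>i\<in>I. X i x - expectation (X i))}
          \<le> exp (- (real (card I) * s\<^sup>2 / (2*V + 2*R * s)))"
proof -
  \<comment> \<open>the Chernoff parameter for which the exponent becomes exactly \<open>- s\<^sup>2 / (2V + 2Rs)\<close>\<close>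
  define l where "l = s / (V + R * s)"
  have l: "0 < l" using V R s unfolding l_def by (intro divide_pos_pos add_pos_pos mult_pos_pos)
  have pos: "0 < V + R * s" using V R s by (intro add_pos_pos mult_pos_pos)
  have lR: "l * R < 1" using V pos by (simp add: l_def field_simps)
  have Xm[measurable]: "\<And>i. i \<in> I \<Longrightarrow> X i \<in> borel_measurable M"
    using ind unfolding indep_vars_def by auto
  define \<mu>' where "\<mu>' i = expectation (X i)" for i
  define S where "S x = (\<Sum>i\<in>I. X i x - \<mu>' i)" for x
  have [measurable]: "S \<in> borel_measurable M" unfolding S_def by measurable
  have "ennreal (prob {x \<in> space M. real (card I) * s \<le> S x}) = emeasure M {x \<in> space M. real (card I) * s \<le> S x}"
    by (simp add: emeasure_eq_measure)
  also have "\<dots> \<le> ennreal (exp (-l * (real (card I) * s))) * (\<integral>\<^sup>+x. ennreal (exp (l * S x)) * indicator (space M) x \<partial>M)"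
    by (intro Chernoff_ineq_nn_integral_ge l) auto
  also have "(\<integral>\<^sup>+x. ennreal (exp (l * S x)) * indicator (space M) x \<partial>M)
      = (\<integral>\<^sup>+x. (\<Prod>i\<in>I. ennreal (exp (l * (X i x - \<mu>' i)))) \<partial>M)"
    by (intro nn_integral_cong)
       (simp_all add: S_def sum_distrib_left exp_sum I prod_ennreal)
  also have "\<dots> = (\<Prod>i\<in>I. \<integral>\<^sup>+x. ennreal (exp (l * (X i x - \<mu>' i))) \<partial>M)"
    by (intro indep_vars_nn_integral I indep_vars_compose2[OF ind]) auto
  also have "ennreal (exp (-l * (real (card I) * s))) * \<dots> \<le>
      ennreal (exp (-l * (real (card I) * s))) * (\<Prod>i\<in>I. ennreal (exp (V * l\<^sup>2 / (2 * (1 - l*R)))))"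
  proof (intro mult_left_mono prod_mono_ennreal)
    fix i assume i: "i \<in> I"
    show "(\<integral>\<^sup>+x. ennreal (exp (l * (X i x - \<mu>' i))) \<partial>M) \<le> ennreal (exp (V * l\<^sup>2 / (2 * (1 - l*R))))"
      unfolding \<mu>'_def using V R l lR mom[OF i]
      by (intro nn_integral_exp_centered_le Xm[OF i]) auto
  qed auto
  also have "\<dots> = ennreal (exp (-l * (real (card I) * s)) * exp (V * l\<^sup>2 / (2 * (1 - l*R))) ^ card I)"
    by (simp add: prod_ennreal ennreal_mult ennreal_power)
  also have "exp (-l * (real (card I) * s)) * exp (V * l\<^sup>2 / (2 * (1 - l*R))) ^ card I
      = exp (real (card I) * (V * l\<^sup>2 / (2 * (1 - l*R)) - l * s))"
    by (simp add: exp_of_nat_mult[symmetric] exp_add[symmetric] algebra_simps)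
  also have "V * l\<^sup>2 / (2 * (1 - l*R)) - l * s = - (s\<^sup>2 / (2*V + 2*R * s))"
    unfolding l_def using V pos by (rule bernstein_exponent_eq)
  finally have "ennreal (prob {x \<in> space M. real (card I) * s \<le> S x})
      \<le> ennreal (exp (- (real (card I) * s\<^sup>2 / (2*V + 2*R * s))))" by simp
  then show ?thesis
    unfolding S_def \<mu>'_def by (simp add: ennreal_le_iff)
qed

lemma bernstein_inequality_abs:
  fixes X :: "'i \<Rightarrow> 'a \<Rightarrow> real"
  assumes I: "finite I" and ind: "indep_vars (\<lambda>_. borel) X I"
    and V: "0 < V" and R: "0 < R" and s: "0 < s"
    and mom: "\<And>i m. i \<in> I \<Longrightarrow> m \<ge> 2 \<Longrightarrow>
                (\<integral>\<^sup>+ x. ennreal (\<bar>X i x\<bar>^m) \<partial>M) \<le> ennreal (fact m / 2 * V * R^(m-2))"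
  shows "prob {x \<in> space M. real (card I) * s \<le> \<bar>\<Sum>i\<in>I. X i x - expectation (X i)\<bar>}
          \<le> 2 * exp (- (real (card I) * s\<^sup>2 / (2*V + 2*R * s)))"
proof -
  have [measurable]: "\<And>i. i \<in> I \<Longrightarrow> X i \<in> borel_measurable M"
    using ind unfolding indep_vars_def by auto
  define A where "A = {x \<in> space M. real (card I) * s \<le> (\<Sum>i\<in>I. X i x - expectation (X i))}"
  define B where "B = {x \<in> space M. real (card I) * s \<le> (\<Sum>i\<in>I. (\<lambda>i x. - X i x) i x - expectation ((\<lambda>i x. - X i x) i))}"
  have indm: "indep_vars (\<lambda>_. borel) (\<lambda>i x. - X i x) I"
    by (rule indep_vars_compose2[OF ind]) auto
  have [measurable]: "A \<in> sets M" "B \<in> sets M" unfolding A_def B_def by measurable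
  have "{x \<in> space M. real (card I) * s \<le> \<bar>\<Sum>i\<in>I. X i x - expectation (X i)\<bar>} \<subseteq> A \<union> B"
    unfolding A_def B_def by (auto simp: sum_negf[symmetric] abs_if split: if_splits)
  then have "prob {x \<in> space M. real (card I) * s \<le> \<bar>\<Sum>i\<in>I. X i x - expectation (X i)\<bar>} \<le> prob (A \<union> B)"
    by (intro finite_measure_mono) auto
  also have "\<dots> \<le> prob A + prob B" by (intro measure_Un_le) auto
  also have "prob A \<le> exp (- (real (card I) * s\<^sup>2 / (2*V + 2*R * s)))"
    unfolding A_def by (rule bernstein_inequality[OF I ind V R s mom])
  also have "prob B \<le> exp (- (real (card I) * s\<^sup>2 / (2*V + 2*R * s)))"
    unfolding B_def by (rule bernstein_inequality[OF I indm V R s]) (use mom in auto)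
  finally show ?thesis by simp
qed

lemma bernstein_mean_diff:
  fixes A B :: "'i \<Rightarrow> 'a \<Rightarrow> real"
  assumes I: "finite I"
    and indA: "indep_vars (\<lambda>_. borel) A I" and indB: "indep_vars (\<lambda>_. borel) B I"
    and V: "0 < V" and R: "0 < R" and t: "0 < t"
    and momA: "\<And>i m. i \<in> I \<Longrightarrow> m \<ge> 2 \<Longrightarrow>
                (\<integral>\<^sup>+ x. ennreal (\<bar>A i x\<bar>^m) \<partial>M) \<le> ennreal (fact m / 2 * V * R^(m-2))"
    and momB: "\<And>i m. i \<in> I \<Longrightarrow> m \<ge> 2 \<Longrightarrow>
                (\<integral>\<^sup>+ x. ennreal (\<bar>B i x\<bar>^m) \<partial>M) \<le> ennreal (fact m / 2 * V * R^(m-2))"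
  defines "Z \<equiv> \<lambda>x. (\<Sum>i\<in>I. A i x - B i x) / real (card I)"
  shows "prob {x \<in> space M. t \<le> \<bar>Z x - expectation Z\<bar>}
           \<le> 4 * exp (- (real (card I) * (t/2)\<^sup>2 / (2*V + 2*R * (t/2))))"
proof -
  have [measurable]: "A i \<in> borel_measurable M" "B i \<in> borel_measurable M" if "i \<in> I" for i
    using that indA indB unfolding indep_vars_def by auto
  have int: "integrable M (A i)" "integrable M (B i)" if "i \<in> I" for i
    using that momA[OF that, of 2] momB[OF that, of 2]
    by (auto intro!: integrable_of_second_moment)
  define DA where "DA x = (\<Sum>i\<in>I. A i x - expectation (A i))" for x
  define DB where "DB x = (\<Sum>i\<in>I. B i x - expectation (B i))" for x
  have "expectation Z = (\<Sum>i\<in>I. expectation (A i) - expectation (B i)) / real (card I)"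
    unfolding Z_def using int by (simp add: Bochner_Integration.integral_sum)
  then have ZD: "Z x - expectation Z = (DA x - DB x) / real (card I)" for x
    unfolding Z_def DA_def DB_def by (simp add: sum_subtractf diff_divide_distrib)
  have "{x \<in> space M. t \<le> \<bar>Z x - expectation Z\<bar>}
      \<subseteq> {x \<in> space M. real (card I) * (t/2) \<le> \<bar>DA x\<bar>} \<union> {x \<in> space M. real (card I) * (t/2) \<le> \<bar>DB x\<bar>}"
  proof (clarify)
    fix x assume x: "x \<in> space M" "t \<le> \<bar>Z x - expectation Z\<bar>"
      "\<not> real (card I) * (t/2) \<le> \<bar>DB x\<bar>"
    have "card I \<noteq> 0"
    proof
      assume "card I = 0"
      then show False using x(2) t by (simp add: ZD)
    qed
    then have "real (card I) * t \<le> \<bar>DA x - DB x\<bar>"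
      using x by (simp add: ZD abs_divide field_simps)
    then show "real (card I) * (t/2) \<le> \<bar>DA x\<bar>" using x(3) by linarith
  qed
  then have "prob {x \<in> space M. t \<le> \<bar>Z x - expectation Z\<bar>}
      \<le> prob {x \<in> space M. real (card I) * (t/2) \<le> \<bar>DA x\<bar>} + prob {x \<in> space M. real (card I) * (t/2) \<le> \<bar>DB x\<bar>}"
    unfolding DA_def DB_def by (intro order_trans[OF finite_measure_mono measure_Un_le]) auto
  also have "\<dots> \<le> 2 * exp (- (real (card I) * (t/2)\<^sup>2 / (2*V + 2*R * (t/2))))
                 + 2 * exp (- (real (card I) * (t/2)\<^sup>2 / (2*V + 2*R * (t/2))))"
    unfolding DA_def DB_def using I V R t momA momB
    by (intro add_mono bernstein_inequality_abs indA indB) auto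
  finally show ?thesis by simp
qed

end

section \<open>Concentration of the Hessian quadratic form\<close>

lemma tanh_measurable[measurable]:
  "f \<in> borel_measurable M \<Longrightarrow> (\<lambda>x. tanh (f x :: real)) \<in> borel_measurable M"
  by (rule measurable_compose[of f _ borel tanh])
     (auto intro!: borel_measurable_continuous_onI continuous_on_tanh continuous_on_id)

context product_prob_space
begin

lemma indep_vars_PiM_coordinates:
  assumes "finite I" "I \<noteq> {}"
  shows "prob_space.indep_vars (PiM I M) M (\<lambda>i x. x i) I"
proof -
  interpret P: prob_space "PiM I M" by (rule prob_space_PiM) (use prob_space in auto)
  show ?thesis
  proof (subst P.indep_vars_iff_distr_eq_PiM'[OF assms(2)])
    show "(\<lambda>x. x i) \<in> measurable (PiM I M) (M i)" if "i \<in> I" for i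
      using that by (rule measurable_component_singleton)
    have "distr (PiM I M) (PiM I M) (\<lambda>x. \<lambda>i\<in>I. x i) = PiM I M"
      using distr_restrict[of I I] assms by simp
    also have "\<dots> = PiM I (\<lambda>i. distr (PiM I M) (M i) (\<lambda>x. x i))"
      by (intro PiM_cong refl PiM_component[symmetric])
    finally show "distr (PiM I M) (PiM I M) (\<lambda>x. \<lambda>i\<in>I. x i) = PiM I (\<lambda>i. distr (PiM I M) (M i) (\<lambda>x. x i))" .
  qed
qed

lemma nn_integral_PiM_restrict:
  assumes "finite I" "J \<subseteq> I" and [measurable]: "f \<in> borel_measurable (PiM J M)"
  shows "(\<integral>\<^sup>+ x. f (restrict x J) \<partial>PiM I M) = (\<integral>\<^sup>+ y. f y \<partial>PiM J M)"
proof -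
  have "(\<integral>\<^sup>+ y. f y \<partial>PiM J M) = (\<integral>\<^sup>+ y. f y \<partial>distr (PiM I M) (PiM J M) (\<lambda>x. restrict x J))"
    using distr_restrict[OF assms(2,1)] by simp
  also have "\<dots> = (\<integral>\<^sup>+ x. f (restrict x J) \<partial>PiM I M)"
    by (rule nn_integral_distr) (use assms in \<open>auto intro!: measurable_restrict_subset\<close>)
  finally show ?thesis ..
qed

lemma nn_integral_PiM_component:
  assumes "i \<in> I" and [measurable]: "f \<in> borel_measurable (M i)"
  shows "(\<integral>\<^sup>+ x. f (x i) \<partial>PiM I M) = (\<integral>\<^sup>+ y. f y \<partial>M i)"
proof -
  have "(\<integral>\<^sup>+ y. f y \<partial>M i) = (\<integral>\<^sup>+ y. f y \<partial>distr (PiM I M) (M i) (\<lambda>x. x i))"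
    using PiM_component[OF assms(1)] by simp
  also have "\<dots> = (\<integral>\<^sup>+ x. f (x i) \<partial>PiM I M)"
    by (rule nn_integral_distr) (use assms in \<open>auto intro!: measurable_component_singleton\<close>)
  finally show ?thesis ..
qed

end

lemma indep_vars_PiM_columns:
  fixes n p :: nat
  assumes th: "0 \<le> \<theta>" "\<theta> \<le> 1" and n: "n \<ge> 1" and p: "p \<ge> 1"
  shows "prob_space.indep_vars (PiM ({..<n}\<times>{..<p}) (\<lambda>_. BG \<theta>))
           (\<lambda>k. PiM ({..<n}\<times>{k}) (\<lambda>_. BG \<theta>)) (\<lambda>k x. restrict x ({..<n}\<times>{k})) {..<p}"
proof -
  interpret P: prob_space "PiM ({..<n}\<times>{..<p}) (\<lambda>_. BG \<theta>)" by (rule prob_space_PiM_BG[OF th])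
  interpret PP: product_prob_space "\<lambda>_. BG \<theta>" "{..<n}\<times>{..<p}" by (rule product_prob_space_BG[OF th])
  have "(0, 0) \<in> {..<n}\<times>{..<p}" using n p by auto
  then have "P.indep_vars (\<lambda>_. BG \<theta>) (\<lambda>i x. x i) ({..<n}\<times>{..<p})"
    by (intro PP.indep_vars_PiM_coordinates) auto
  then show ?thesis
    by (rule P.indep_vars_restrict) (auto simp: disjoint_family_on_def)
qed

lemma hess_terms_restrict_column:
  assumes "n \<ge> 1"
  shows "curv_term n \<mu> w (restrict x ({..<n}\<times>{k})) k = curv_term n \<mu> w x k"
    and "tanh_term n \<mu> w (restrict x ({..<n}\<times>{k})) k = tanh_term n \<mu> w x k"
proof -
  have "qdot n w (restrict x ({..<n}\<times>{k})) k = qdot n w x k"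
    and "lin_form n w (restrict x ({..<n}\<times>{k})) k = lin_form n w x k"
    unfolding qdot_def lin_form_def using assms by (auto intro!: sum.cong)
  then show "curv_term n \<mu> w (restrict x ({..<n}\<times>{k})) k = curv_term n \<mu> w x k"
    and "tanh_term n \<mu> w (restrict x ({..<n}\<times>{k})) k = tanh_term n \<mu> w x k"
    unfolding curv_term_def tanh_term_def using assms by simp_all
qed

lemma hess_terms_measurable:
  assumes "n \<ge> 1" "k \<in> L"
  shows "(\<lambda>x. curv_term n \<mu> w x k) \<in> borel_measurable (PiM ({..<n}\<times>L) (\<lambda>_. BG \<theta>))"
    and "(\<lambda>x. tanh_term n \<mu> w x k) \<in> borel_measurable (PiM ({..<n}\<times>L) (\<lambda>_. BG \<theta>))"
    and "(\<lambda>x. lin_form n w x k) \<in> borel_measurable (PiM ({..<n}\<times>L) (\<lambda>_. BG \<theta>))"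
proof -
  have [measurable]: "(\<lambda>x. x (i,k)) \<in> borel_measurable (PiM ({..<n}\<times>L) (\<lambda>_. BG \<theta>))"
    if "i < n - 1 \<or> i = n - 1" for i
    using that assms by (intro measurable_PiM_BG_component) auto
  show "(\<lambda>x. curv_term n \<mu> w x k) \<in> borel_measurable (PiM ({..<n}\<times>L) (\<lambda>_. BG \<theta>))"
    and "(\<lambda>x. tanh_term n \<mu> w x k) \<in> borel_measurable (PiM ({..<n}\<times>L) (\<lambda>_. BG \<theta>))"
    and "(\<lambda>x. lin_form n w x k) \<in> borel_measurable (PiM ({..<n}\<times>L) (\<lambda>_. BG \<theta>))"
    unfolding curv_term_def tanh_term_def lin_form_def qdot_def by measurable
qed

lemma indep_vars_hess_terms:
  fixes n p :: nat
  assumes th: "0 \<le> \<theta>" "\<theta> \<le> 1" and n: "n \<ge> 1" and p: "p \<ge> 1"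
  shows "prob_space.indep_vars (PiM ({..<n}\<times>{..<p}) (\<lambda>_. BG \<theta>)) (\<lambda>_. borel) (\<lambda>k x. curv_term n \<mu> w x k) {..<p}"
    and "prob_space.indep_vars (PiM ({..<n}\<times>{..<p}) (\<lambda>_. BG \<theta>)) (\<lambda>_. borel) (\<lambda>k x. tanh_term n \<mu> w x k) {..<p}"
proof -
  interpret P: prob_space "PiM ({..<n}\<times>{..<p}) (\<lambda>_. BG \<theta>)" by (rule prob_space_PiM_BG[OF th])
  note columns = indep_vars_PiM_columns[OF th n p]
  have "P.indep_vars (\<lambda>_. borel) (\<lambda>k x. curv_term n \<mu> w (restrict x ({..<n}\<times>{k})) k) {..<p}"
    by (rule P.indep_vars_compose2[OF columns]) (rule hess_terms_measurable(1)[OF n], simp)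
  then show "P.indep_vars (\<lambda>_. borel) (\<lambda>k x. curv_term n \<mu> w x k) {..<p}"
    by (simp add: hess_terms_restrict_column[OF n])
  have "P.indep_vars (\<lambda>_. borel) (\<lambda>k x. tanh_term n \<mu> w (restrict x ({..<n}\<times>{k})) k) {..<p}"
    by (rule P.indep_vars_compose2[OF columns]) (rule hess_terms_measurable(2)[OF n], simp)
  then show "P.indep_vars (\<lambda>_. borel) (\<lambda>k x. tanh_term n \<mu> w x k) {..<p}"
    by (simp add: hess_terms_restrict_column[OF n])
qed

definition lin_form_coeff :: "nat \<Rightarrow> (nat \<Rightarrow> real) \<Rightarrow> nat \<times> nat \<Rightarrow> real" where
  "lin_form_coeff n w c = (if fst c < n - 1 then w (fst c) / sqrt (sqnorm (n-1) w)
                  else - sqrt (sqnorm (n-1) w) / sqrt (1 - sqnorm (n-1) w))"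

lemma sum_column: "(\<Sum>c\<in>{..<n}\<times>{k}. g c) = (\<Sum>i<n. g (i,k))"
proof -
  have "{..<n}\<times>{k} = (\<lambda>i. (i,k)) ` {..<n}" by auto
  then show ?thesis by (simp add: sum.reindex inj_on_def)
qed

lemma lin_form_eq_sum_coeff:
  assumes n: "n \<ge> 1" and S: "0 < sqnorm (n-1) w" "sqnorm (n-1) w < 1"
  shows "lin_form n w x k / sqrt (sqnorm (n-1) w) = (\<Sum>c\<in>{..<n}\<times>{k}. lin_form_coeff n w c * x c)"
proof -
  obtain N where N: "n = Suc N" using n by (cases n) auto
  define S where "S = sqnorm N w"
  have S0: "0 < S" "S < 1" using S by (simp_all add: S_def N)
  have "(\<Sum>c\<in>{..<n}\<times>{k}. lin_form_coeff n w c * x c)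
      = (\<Sum>i<N. w i / sqrt S * x (i,k)) - sqrt S / sqrt (1 - S) * x (N,k)"
    unfolding sum_column N by (simp add: lin_form_coeff_def S_def)
  also have "\<dots> = lin_form n w x k / sqrt S"
  proof -
    have "S / sqrt S = sqrt S" using S0 by (simp add: real_div_sqrt)
    then show ?thesis
      unfolding lin_form_def N using S0
      by (simp add: S_def[symmetric] sum_divide_distrib diff_divide_distrib) (simp add: field_simps)
  qed
  finally show ?thesis by (simp add: N S_def)
qed

lemma sum_lin_form_coeff_squares:
  assumes n: "n \<ge> 1" and S: "0 < sqnorm (n-1) w" "sqnorm (n-1) w < 1"
  shows "(\<Sum>c\<in>{..<n}\<times>{k}. (lin_form_coeff n w c)\<^sup>2) = 1 / (1 - sqnorm (n-1) w)"
proof -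
  obtain N where N: "n = Suc N" using n by (cases n) auto
  define S where "S = sqnorm N w"
  have S0: "0 < S" "S < 1" using S by (simp_all add: S_def N)
  have "(\<Sum>c\<in>{..<n}\<times>{k}. (lin_form_coeff n w c)\<^sup>2) = (\<Sum>i<N. (w i)\<^sup>2 / S) + S / (1 - S)"
    unfolding sum_column N using S0 by (simp add: lin_form_coeff_def S_def[symmetric] power_divide)
  also have "(\<Sum>i<N. (w i)\<^sup>2 / S) = 1"
    using S0 by (simp add: sum_divide_distrib[symmetric] S_def sqnorm_def)
  also have "1 + S / (1 - S) = 1 / (1 - S)" using S0 by (simp add: field_simps)
  finally show ?thesis by (simp add: N S_def)
qed

lemma curv_term_bounds:
  assumes "0 < sqnorm (n-1) w" "0 < \<mu>"
  shows "0 \<le> curv_term n \<mu> w X k"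
    and "curv_term n \<mu> w X k \<le> (lin_form n w X k / sqrt (sqnorm (n-1) w))\<^sup>2 / \<mu>"
proof -
  have t: "(tanh (qdot n w X k / \<mu>))\<^sup>2 < 1"
    using tanh_real_bounds[of "qdot n w X k / \<mu>"] by (simp add: abs_square_less_1 abs_less_iff)
  have y: "0 \<le> (lin_form n w X k / sqrt (sqnorm (n-1) w))\<^sup>2 / \<mu>" using assms(2) by simp
  have eq: "curv_term n \<mu> w X k
      = (1 - (tanh (qdot n w X k / \<mu>))\<^sup>2) * ((lin_form n w X k / sqrt (sqnorm (n-1) w))\<^sup>2 / \<mu>)"
    unfolding curv_term_def using assms(1) by (simp add: power_divide)
  show "0 \<le> curv_term n \<mu> w X k"
    unfolding eq using t y by (intro mult_nonneg_nonneg) auto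
  show "curv_term n \<mu> w X k \<le> (lin_form n w X k / sqrt (sqnorm (n-1) w))\<^sup>2 / \<mu>"
    unfolding eq using t by (intro mult_left_le_one_le[OF y]) auto
qed

lemma nn_integral_lin_form_power_le:
  assumes th: "0 \<le> \<theta>" "\<theta> \<le> 1" and n: "n \<ge> 1"
    and S: "0 < sqnorm (n-1) w" "sqnorm (n-1) w < 1" and k: "k < p"
  shows "(\<integral>\<^sup>+ X. ennreal ((lin_form n w X k / sqrt (sqnorm (n-1) w))^(2*m)) \<partial>PiM ({..<n}\<times>{..<p}) (\<lambda>_. BG \<theta>))
      \<le> ennreal ((1 / (1 - sqnorm (n-1) w))^m * gauss_moment m)"
proof -
  interpret PP: product_prob_space "\<lambda>_. BG \<theta>" "{..<n}\<times>{..<p}" by (rule product_prob_space_BG[OF th])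
  define J where "J = {..<n}\<times>{k}"
  have "(\<integral>\<^sup>+ X. ennreal ((lin_form n w X k / sqrt (sqnorm (n-1) w))^(2*m)) \<partial>PiM ({..<n}\<times>{..<p}) (\<lambda>_. BG \<theta>))
      = (\<integral>\<^sup>+ X. ennreal ((\<Sum>c\<in>J. lin_form_coeff n w c * restrict X J c)^(2*m)) \<partial>PiM ({..<n}\<times>{..<p}) (\<lambda>_. BG \<theta>))"
    unfolding J_def lin_form_eq_sum_coeff[OF n S] by (intro nn_integral_cong) (simp cong: sum.cong)
  also have "\<dots> = (\<integral>\<^sup>+ y. ennreal ((\<Sum>c\<in>J. lin_form_coeff n w c * y c)^(2*m)) \<partial>PiM J (\<lambda>_. BG \<theta>))"
    by (rule PP.nn_integral_PiM_restrict) (use k in \<open>auto simp: J_def\<close>)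
  also have "\<dots> \<le> ennreal ((\<Sum>c\<in>J. (lin_form_coeff n w c)\<^sup>2)^m * gauss_moment m)"
    by (rule nn_integral_BG_linear_form_power_le[OF th]) (simp add: J_def)
  also have "(\<Sum>c\<in>J. (lin_form_coeff n w c)\<^sup>2) = 1 / (1 - sqnorm (n-1) w)"
    unfolding J_def by (rule sum_lin_form_coeff_squares[OF n S])
  finally show ?thesis .
qed

lemma nn_integral_curv_term_power_le:
  assumes th: "0 \<le> \<theta>" "\<theta> \<le> 1" and n: "n \<ge> 1"
    and S: "0 < sqnorm (n-1) w" "sqnorm (n-1) w < 1" and mu: "0 < \<mu>" and k: "k < p"
    and m: "m \<ge> 1" and R: "2 / (\<mu> * (1 - sqnorm (n-1) w)) \<le> R"
  shows "(\<integral>\<^sup>+ X. ennreal (\<bar>curv_term n \<mu> w X k\<bar>^m) \<partial>PiM ({..<n}\<times>{..<p}) (\<lambda>_. BG \<theta>))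
      \<le> ennreal (fact m / 2 * R ^ m)"
proof -
  define Q where "Q X = lin_form n w X k / sqrt (sqnorm (n-1) w)" for X
  have [measurable]: "(\<lambda>X. lin_form n w X k) \<in> borel_measurable (PiM ({..<n}\<times>{..<p}) (\<lambda>_. BG \<theta>))"
    using hess_terms_measurable(3)[OF n] k by simp
  then have [measurable]: "Q \<in> borel_measurable (PiM ({..<n}\<times>{..<p}) (\<lambda>_. BG \<theta>))"
    unfolding Q_def by measurable
  have "\<bar>curv_term n \<mu> w X k\<bar>^m \<le> ((Q X)\<^sup>2 / \<mu>)^m" for X
    using curv_term_bounds[OF S(1) mu] by (auto simp: Q_def intro!: power_mono)
  also have "((Q X)\<^sup>2 / \<mu>)^m = (1/\<mu>)^m * (Q X)^(2*m)" for X
    by (simp add: power_divide flip: power_mult)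
  finally have "(\<integral>\<^sup>+ X. ennreal (\<bar>curv_term n \<mu> w X k\<bar>^m) \<partial>PiM ({..<n}\<times>{..<p}) (\<lambda>_. BG \<theta>))
      \<le> (\<integral>\<^sup>+ X. ennreal ((1/\<mu>)^m) * ennreal ((Q X)^(2*m)) \<partial>PiM ({..<n}\<times>{..<p}) (\<lambda>_. BG \<theta>))"
    using mu by (intro nn_integral_mono) (simp add: ennreal_mult[symmetric])
  also have "\<dots> = ennreal ((1/\<mu>)^m) * (\<integral>\<^sup>+ X. ennreal ((Q X)^(2*m)) \<partial>PiM ({..<n}\<times>{..<p}) (\<lambda>_. BG \<theta>))"
    by (rule nn_integral_cmult) measurable
  also have "\<dots> \<le> ennreal ((1/\<mu>)^m) * ennreal ((1 / (1 - sqnorm (n-1) w))^m * gauss_moment m)"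
    unfolding Q_def by (rule mult_left_mono[OF nn_integral_lin_form_power_le[OF th n S k]]) simp
  also have "\<dots> = ennreal ((1 / (\<mu> * (1 - sqnorm (n-1) w)))^m * gauss_moment m)"
  proof -
    have "(1/\<mu>)^m * (1 / (1 - sqnorm (n-1) w))^m = (1 / (\<mu> * (1 - sqnorm (n-1) w)))^m"
      by (simp only: power_mult_distrib[symmetric] times_divide_times_eq mult_1)
    then show ?thesis
      using mu S gauss_moment_pos[of m] by (simp add: ennreal_mult[symmetric] mult.assoc)
  qed
  also have "\<dots> \<le> ennreal (fact m / 2 * R ^ m)"
    using mu S R m by (intro ennreal_leI gauss_moment_scaled_le) auto
  finally show ?thesis .
qed

lemma nn_integral_tanh_term_power_le:
  assumes th: "0 \<le> \<theta>" "\<theta> \<le> 1" and n: "n \<ge> 1"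
    and S: "sqnorm (n-1) w < 1" and k: "k < p" and m: "m \<ge> 2"
    and R: "1 / sqrt (1 - sqnorm (n-1) w) ^ 3 \<le> R"
  shows "(\<integral>\<^sup>+ x. ennreal (\<bar>tanh_term n \<mu> w x k\<bar>^m) \<partial>PiM ({..<n}\<times>{..<p}) (\<lambda>_. BG \<theta>))
      \<le> ennreal (fact m / 2 * R ^ m)"
proof -
  define c where "c = 1 / sqrt (1 - sqnorm (n-1) w) ^ 3"
  have c0: "0 < c" using S by (simp add: c_def)
  have ptw: "\<bar>tanh_term n \<mu> w x k\<bar>^m \<le> c^m * \<bar>x (n-1,k)\<bar>^m" for x
  proof -
    have t: "\<bar>tanh (qdot n w x k / \<mu>)\<bar> \<le> 1"
      using tanh_real_bounds[of "qdot n w x k / \<mu>"] by (simp add: abs_le_iff)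
    have "\<bar>tanh_term n \<mu> w x k\<bar> = \<bar>tanh (qdot n w x k / \<mu>)\<bar> * (c * \<bar>x (n-1,k)\<bar>)"
      unfolding tanh_term_def c_def using S by (simp add: abs_mult abs_divide)
    also have "\<dots> \<le> 1 * (c * \<bar>x (n-1,k)\<bar>)"
      using t c0 by (intro mult_right_mono) auto
    finally have "\<bar>tanh_term n \<mu> w x k\<bar> \<le> c * \<bar>x (n-1,k)\<bar>" by simp
    then have "\<bar>tanh_term n \<mu> w x k\<bar>^m \<le> (c * \<bar>x (n-1,k)\<bar>)^m" by (intro power_mono) auto
    then show ?thesis by (simp add: power_mult_distrib)
  qed
  have "(\<integral>\<^sup>+ x. ennreal (\<bar>tanh_term n \<mu> w x k\<bar>^m) \<partial>PiM ({..<n}\<times>{..<p}) (\<lambda>_. BG \<theta>))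
      \<le> (\<integral>\<^sup>+ x. ennreal (c^m * \<bar>x (n-1,k)\<bar>^m) \<partial>PiM ({..<n}\<times>{..<p}) (\<lambda>_. BG \<theta>))"
    by (intro nn_integral_mono ennreal_leI ptw)
  also have "\<dots> = ennreal (c^m) * (\<integral>\<^sup>+ x. ennreal (\<bar>x (n-1,k)\<bar>^m) \<partial>PiM ({..<n}\<times>{..<p}) (\<lambda>_. BG \<theta>))"
    using c0 measurable_PiM_BG_component[of "(n-1,k)" "{..<n}\<times>{..<p}" \<theta>] n k
    by (subst nn_integral_cmult[symmetric]) (auto intro!: nn_integral_cong simp: ennreal_mult)
  also have "(\<integral>\<^sup>+ x. ennreal (\<bar>x (n-1,k)\<bar>^m) \<partial>PiM ({..<n}\<times>{..<p}) (\<lambda>_. BG \<theta>))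
      = (\<integral>\<^sup>+ y. ennreal (\<bar>y\<bar>^m) \<partial>BG \<theta>)"
    using n k by (intro product_prob_space.nn_integral_PiM_component[OF product_prob_space_BG[OF th]]) auto
  also have "ennreal (c^m) * \<dots> \<le> ennreal (c^m) * ennreal (fact m / 2)"
    by (rule mult_left_mono[OF nn_integral_BG_abs_power_le[OF th m]]) simp
  also have "\<dots> \<le> ennreal (fact m / 2 * R ^ m)"
  proof -
    have "c ^ m \<le> R ^ m" using c0 R by (intro power_mono) (auto simp: c_def)
    then show ?thesis
      using c0 by (simp add: ennreal_mult[symmetric] ennreal_leI divide_right_mono mult_left_mono)
  qed
  finally show ?thesis .
qed

lemma Gamma_set_sqnorm_bounds:
  assumes "w \<in> Gamma_set n"
  shows "0 < n" "sqnorm (n - 1) w < 1" "1 / (1 - sqnorm (n - 1) w) \<le> 4 * real n"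
proof -
  show n: "0 < n"
    using assms by (cases n) (auto simp: Gamma_set_def sqnorm_def)
  have w: "sqnorm (n - 1) w < 1 - 1 / (4 * real n)"
    using assms n by (simp add: Gamma_set_def diff_divide_distrib)
  moreover have "0 < 1 / (4 * real n)" using n by simp
  ultimately show S: "sqnorm (n - 1) w < 1" by linarith
  show "1 / (1 - sqnorm (n - 1) w) \<le> 4 * real n"
    using w n S by (simp add: field_simps)
qed

lemma hess_moment_scale_le:
  assumes mu: "0 < \<mu>" "\<mu> \<le> 1 / sqrt (real n)" and S: "0 < 1 - S" "1 / (1 - S) \<le> 4 * real n"
  shows "2 / (\<mu> * (1 - S)) \<le> 8 * real n / \<mu>" and "1 / sqrt (1 - S) ^ 3 \<le> 8 * real n / \<mu>"
proof -
  have "2 / (\<mu> * (1 - S)) = 2 / \<mu> * (1 / (1 - S))" by simp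
  also have "\<dots> \<le> 2 / \<mu> * (4 * real n)" using S mu by (intro mult_left_mono) auto
  finally show "2 / (\<mu> * (1 - S)) \<le> 8 * real n / \<mu>" by simp
  have "0 < 1 / (1 - S)" using S(1) by simp
  then have "0 < 4 * real n" using S(2) by linarith
  then have n: "0 < sqrt (real n)" by simp
  define q where "q = 1 / sqrt (1 - S)"
  have q: "0 < q" "q\<^sup>2 = 1 / (1 - S)" using S by (simp_all add: q_def power_divide)
  have "q = sqrt (1 / (1 - S))" by (simp add: q_def real_sqrt_divide)
  also have "\<dots> \<le> sqrt (4 * real n)" by (rule real_sqrt_le_mono[OF S(2)])
  also have "\<dots> = 2 * sqrt (real n)" by (simp add: real_sqrt_mult)
  also have "\<dots> \<le> 2 / \<mu>"
    using mu n by (simp add: field_simps)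
  finally have "q * q\<^sup>2 \<le> 2 / \<mu> * (4 * real n)"
    using q S mu by (intro mult_mono) auto
  then show "1 / sqrt (1 - S) ^ 3 \<le> 8 * real n / \<mu>"
    by (simp add: q_def power2_eq_square power3_eq_cube mult.commute)
qed

lemma hess_quad_g_obj_deviation_le:
  fixes n p :: nat
  assumes th: "0 \<le> \<theta>" "\<theta> \<le> 1" and mu: "0 < \<mu>" and t: "0 < t"
    and S: "0 < sqnorm (n - 1) w" "sqnorm (n - 1) w < 1"
    and R: "2 / (\<mu> * (1 - sqnorm (n - 1) w)) \<le> R" "1 / sqrt (1 - sqnorm (n - 1) w) ^ 3 \<le> R"
  defines "M \<equiv> PiM ({..<n}\<times>{..<p}) (\<lambda>_. BG \<theta>)"
    and "Z \<equiv> \<lambda>X. hess_quad (n - 1) (\<lambda>v. g_obj n p \<mu> v X) w / sqnorm (n - 1) w"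
  shows "measure M {X \<in> space M. t \<le> \<bar>Z X - (\<integral>Y. Z Y \<partial>M)\<bar>}
           \<le> 4 * exp (- (real p * (t/2)\<^sup>2 / (2 * R\<^sup>2 + 2 * R * (t/2))))"
proof -
  interpret P: prob_space M unfolding M_def by (rule prob_space_PiM_BG[OF th])
  show ?thesis
  proof (cases "p = 0")
    case True
    then show ?thesis by (simp add: order_trans[OF P.prob_le_1])
  next
    case False
    then have p: "p \<ge> 1" by simp
    have n: "n \<ge> 1" using S(1) by (cases n) (auto simp: sqnorm_def)
    have R0: "0 < R" using S(2) by (intro order.strict_trans2[OF _ R(2)]) simp
    have Z: "Z = (\<lambda>X. (\<Sum>k\<in>{..<p}. curv_term n \<mu> w X k - tanh_term n \<mu> w X k) / real (card {..<p}))"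
      unfolding Z_def using hess_quad_g_obj_eq[OF S mu] by simp
    have R2: "R\<^sup>2 * R ^ (m - 2) = R ^ m" if "m \<ge> 2" for m
      using that by (metis le_add_diff_inverse power_add)
    have mom_curv: "(\<integral>\<^sup>+ X. ennreal (\<bar>curv_term n \<mu> w X k\<bar>^m) \<partial>M) \<le> ennreal (fact m / 2 * R\<^sup>2 * R^(m-2))"
      if "k \<in> {..<p}" "m \<ge> 2" for k m
      using nn_integral_curv_term_power_le[OF th n S mu, of k p m R] that R(1) by (simp add: M_def mult.assoc R2)
    have mom_tanh: "(\<integral>\<^sup>+ X. ennreal (\<bar>tanh_term n \<mu> w X k\<bar>^m) \<partial>M) \<le> ennreal (fact m / 2 * R\<^sup>2 * R^(m-2))"
      if "k \<in> {..<p}" "m \<ge> 2" for k m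
      using nn_integral_tanh_term_power_le[OF th n S(2), of k p m R] that R(2) by (simp add: M_def mult.assoc R2)
    have "measure M {X \<in> space M. t \<le> \<bar>Z X - (\<integral>Y. Z Y \<partial>M)\<bar>}
        \<le> 4 * exp (- (real (card {..<p}) * (t/2)\<^sup>2 / (2 * R\<^sup>2 + 2 * R * (t/2))))"
      unfolding Z using indep_vars_hess_terms[OF th n p] R0
      by (intro P.bernstein_mean_diff[OF _ _ _ _ R0 t mom_curv mom_tanh]) (simp_all add: M_def)
    then show ?thesis by simp
  qed
qed

theorem mainTheorem9:
  fixes n p :: nat and \<theta> \<mu> t :: real and w :: "nat \<Rightarrow> real"
  assumes "0 < \<theta>" "\<theta> < 1"
    and "0 < \<mu>" "\<mu> \<le> 1 / sqrt (real n)"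
    and "w \<in> Gamma_set n" "sqnorm (n - 1) w \<noteq> 0"
    and "0 < t"
  shows "let M = BG_matrix n p \<theta>;
             Z = (\<lambda>X. hess_quad (n - 1) (\<lambda>v. g_obj n p \<mu> v X) w / sqnorm (n - 1) w)
         in measure M {X \<in> space M. \<bar>Z X - (\<integral>Y. Z Y \<partial>M)\<bar> \<ge> t}
            \<le> 4 * exp (- (real p * \<mu>\<^sup>2 * t\<^sup>2) / (512 * (real n)\<^sup>2 + 32 * real n * \<mu> * t))"
proof -
  define S where "S = sqnorm (n - 1) w"
  have n: "0 < n" and S: "0 < S" "S < 1" "1 / (1 - S) \<le> 4 * real n"
    using Gamma_set_sqnorm_bounds[OF assms(5)] sqnorm_nonneg[of "n - 1" w] assms(6)
    by (simp_all add: S_def)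
  define R where "R = 8 * real n / \<mu>"
  have R: "2 / (\<mu> * (1 - S)) \<le> R" "1 / sqrt (1 - S) ^ 3 \<le> R"
    unfolding R_def using hess_moment_scale_le[OF assms(3,4)] S by auto
  have "real p * (t/2)\<^sup>2 / (2 * R\<^sup>2 + 2 * R * (t/2))
      = real p * \<mu>\<^sup>2 * t\<^sup>2 / (512 * (real n)\<^sup>2 + 32 * real n * \<mu> * t)"
    unfolding R_def using n assms(3,7) by (simp add: field_simps power2_eq_square)
  then show ?thesis
    using hess_quad_g_obj_deviation_le[of \<theta> \<mu> t n w R p] assms(1-3,7) S R
    by (simp add: Let_def BG_matrix_def S_def)
qed

end
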